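(* Let $(\psi_i)_{i\in\mathbb N}$ be bounded measurable real functions on $[0,T]\times\overline{\mathcal O}$. For a finite nonempty $I\subset\mathbb N$ and $(t,x)\in[0,T]\times\overline{\mathcal O}$ let $$v^I(t,x)=\inf_{\alpha\in L^2(t,T;\mathbb R^m)}\inf_{\theta_I\in[t,T]^I}\Big\{\frac12\int_t^{\max_{i\in I}\theta_i}|\alpha_s|^2ds+\sum_{i\in I}\psi_i(\theta_i,Y^{t,x,\alpha}_{\theta_i})\Big\},$$ $$u^I(t,x)=\inf_{\alpha\in L^2(t,T;\mathbb R^m)}\inf_{\theta\in[t,T]}\Big\{\frac12\int_t^\theta|\alpha_s|^2ds+\phi^I(\theta,Y^{t,x,\alpha}_\theta)\Big\},$$ with $\phi^I=\psi_i$ if $I=\{i\}$ and $\phi^I=\min_{i\in I}\{\psi_i+v^{I\setminus\{i\}}\}$ if $I$ has at least two elements. Then $v^I=u^I$ on $[0,T]\times\overline{\mathcal O}$ for every finite nonempty $I$.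
   Context: Standing assumptions: $\mathcal O\subset\mathbb R^d$ bounded open of class $W^{2,\infty}$ with outward normal $n$; $\gamma$ Lipschitz with $\gamma\cdot n\ge c_0>0$ on $\partial\mathcal O$; $b,\sigma$ continuous on $[0,T]\times\overline{\mathcal O}$, Lipschitz in space uniformly in time. $Y^{t,x,\alpha}$: the unique solution on $[t,T]$ of $Y_s=x+\int_t^s(b(u,Y_u)-\sigma(u,Y_u)\alpha_u)du-z_s$, $Y_s\in\overline{\mathcal O}$, $z_s=\int_t^s1_{\partial\mathcal O}(Y_u)\gamma(Y_u)d|z|_u$ ($z$ continuous, of bounded variation). *)

theory Defs
  imports "HOL-Analysis.Analysis"
begin

definition total_variation :: "(real \<Rightarrow> 'a::real_normed_vector) \<Rightarrow> real \<Rightarrow> real \<Rightarrow> real" where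
  "total_variation z a b =
     (if a \<le> b then
        (SUP p \<in> {p::real list. p \<noteq> [] \<and> sorted p \<and> hd p = a \<and> last p = b}.
           (\<Sum>i < length p - 1. norm (z (p ! Suc i) - z (p ! i))))
      else 0)"

definition bounded_variation_on :: "(real \<Rightarrow> 'a::real_normed_vector) \<Rightarrow> real \<Rightarrow> real \<Rightarrow> bool" where
  "bounded_variation_on z a b \<longleftrightarrow>
     bdd_above ((\<lambda>p. \<Sum>i < length p - 1. norm (z (p ! Suc i) - z (p ! i))) `
                {p::real list. p \<noteq> [] \<and> sorted p \<and> hd p = a \<and> last p = b})"

text \<open>Domain of class W^{2,infinity}: given by a global defining function rho with
  Lipschitz gradient G (i.e. rho in C^{1,1}), Dom = {rho < 0}, G nonvanishing on {rho = 0}.\<close>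
definition W2inf_domain :: "(real^'d) set \<Rightarrow> (real^'d \<Rightarrow> real) \<Rightarrow> (real^'d \<Rightarrow> real^'d) \<Rightarrow> bool" where
  "W2inf_domain Dom \<rho> G \<longleftrightarrow>
     (\<forall>x. (\<rho> has_derivative (\<lambda>h. G x \<bullet> h)) (at x)) \<and>
     (\<exists>L. L-lipschitz_on UNIV G) \<and>
     Dom = {x. \<rho> x < 0} \<and>
     (\<forall>x. \<rho> x = 0 \<longrightarrow> G x \<noteq> 0)"

definition L2 :: "real \<Rightarrow> real \<Rightarrow> (real \<Rightarrow> real^'m) set" where
  "L2 t T = {\<alpha>. set_borel_measurable lborel {t..T} \<alpha> \<and>
                 set_integrable lborel {t..T} (\<lambda>s. (norm (\<alpha> s))\<^sup>2)}"

definition refl_sol ::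
  "(real^'d) set \<Rightarrow> (real^'d \<Rightarrow> real^'d) \<Rightarrow> (real \<Rightarrow> real^'d \<Rightarrow> real^'d)
   \<Rightarrow> (real \<Rightarrow> real^'d \<Rightarrow> real^'m^'d) \<Rightarrow> real \<Rightarrow> real \<Rightarrow> real^'d \<Rightarrow> (real \<Rightarrow> real^'m)
   \<Rightarrow> (real \<Rightarrow> real^'d) \<Rightarrow> (real \<Rightarrow> real^'d) \<Rightarrow> bool" where
  "refl_sol Dom \<gamma> b \<sigma> T t x \<alpha> Y z \<longleftrightarrow>
     continuous_on {t..T} Y \<and> continuous_on {t..T} z \<and> bounded_variation_on z t T \<and>
     (\<forall>s\<in>{t..T}.
        Y s \<in> closure Dom \<and>
        Y s = x + (LINT u:{t..s}|lborel. b u (Y u) - \<sigma> u (Y u) *v \<alpha> u) - z s \<and>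
        z s = (LINT u:{t..s}|interval_measure (\<lambda>r. total_variation z t (min r T)).
                 indicator (frontier Dom) (Y u) *\<^sub>R \<gamma> (Y u)))"

definition Ysol ::
  "(real^'d) set \<Rightarrow> (real^'d \<Rightarrow> real^'d) \<Rightarrow> (real \<Rightarrow> real^'d \<Rightarrow> real^'d)
   \<Rightarrow> (real \<Rightarrow> real^'d \<Rightarrow> real^'m^'d) \<Rightarrow> real \<Rightarrow> real \<Rightarrow> real^'d \<Rightarrow> (real \<Rightarrow> real^'m)
   \<Rightarrow> real \<Rightarrow> real^'d" where
  "Ysol Dom \<gamma> b \<sigma> T t x \<alpha> s = (THE y. \<exists>Y z. refl_sol Dom \<gamma> b \<sigma> T t x \<alpha> Y z \<and> Y s = y)"

definition vI ::
  "(real^'d) set \<Rightarrow> (real^'d \<Rightarrow> real^'d) \<Rightarrow> (real \<Rightarrow> real^'d \<Rightarrow> real^'d)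
   \<Rightarrow> (real \<Rightarrow> real^'d \<Rightarrow> real^'m^'d) \<Rightarrow> real \<Rightarrow> (nat \<Rightarrow> real \<Rightarrow> real^'d \<Rightarrow> real)
   \<Rightarrow> nat set \<Rightarrow> real \<Rightarrow> real^'d \<Rightarrow> real" where
  "vI Dom \<gamma> b \<sigma> T \<psi> I t x =
     (INF p \<in> {(\<alpha>, \<theta>). \<alpha> \<in> (L2 t T :: (real \<Rightarrow> real^'m) set) \<and> (\<forall>i\<in>I. \<theta> i \<in> {t..T})}.
        (case p of (\<alpha>, \<theta>) \<Rightarrow>
          (1/2) * (LINT s:{t..Max (\<theta> ` I)}|lborel. (norm (\<alpha> s))\<^sup>2)
          + (\<Sum>i\<in>I. \<psi> i (\<theta> i) (Ysol Dom \<gamma> b \<sigma> T t x \<alpha> (\<theta> i)))))"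

definition phiI ::
  "(real^'d) set \<Rightarrow> (real^'d \<Rightarrow> real^'d) \<Rightarrow> (real \<Rightarrow> real^'d \<Rightarrow> real^'d)
   \<Rightarrow> (real \<Rightarrow> real^'d \<Rightarrow> real^'m^'d) \<Rightarrow> real \<Rightarrow> (nat \<Rightarrow> real \<Rightarrow> real^'d \<Rightarrow> real)
   \<Rightarrow> nat set \<Rightarrow> real \<Rightarrow> real^'d \<Rightarrow> real" where
  "phiI Dom \<gamma> b \<sigma> T \<psi> I t x =
     (if card I = 1 then \<psi> (the_elem I) t x
      else Min ((\<lambda>i. \<psi> i t x + vI Dom \<gamma> b \<sigma> T \<psi> (I - {i}) t x) ` I))"

definition uI ::
  "(real^'d) set \<Rightarrow> (real^'d \<Rightarrow> real^'d) \<Rightarrow> (real \<Rightarrow> real^'d \<Rightarrow> real^'d)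
   \<Rightarrow> (real \<Rightarrow> real^'d \<Rightarrow> real^'m^'d) \<Rightarrow> real \<Rightarrow> (nat \<Rightarrow> real \<Rightarrow> real^'d \<Rightarrow> real)
   \<Rightarrow> nat set \<Rightarrow> real \<Rightarrow> real^'d \<Rightarrow> real" where
  "uI Dom \<gamma> b \<sigma> T \<psi> I t x =
     (INF p \<in> {(\<alpha>, \<theta>). \<alpha> \<in> (L2 t T :: (real \<Rightarrow> real^'m) set) \<and> \<theta> \<in> {t..T}}.
        (case p of (\<alpha>, \<theta>) \<Rightarrow>
          (1/2) * (LINT s:{t..\<theta>}|lborel. (norm (\<alpha> s))\<^sup>2)
          + phiI Dom \<gamma> b \<sigma> T \<psi> I \<theta> (Ysol Dom \<gamma> b \<sigma> T t x \<alpha> \<theta>)))"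

end

theory Submission
  imports Defs
begin

(* The equality v^I = u^I rests on a single dynamical fact, the flow property of the
   reflected equation: running the solution from x with alpha up to time r and then the
   solution restarted at Y_r with beta yields the solution driven by the concatenated
   control. Proving it requires the additivity of total variation and of the
   Lebesgue-Stieltjes integrals defining the reflection term. *)

section \<open>Total variation of paths\<close>

fun var_sum :: "(real \<Rightarrow> 'a::real_normed_vector) \<Rightarrow> real list \<Rightarrow> real" where
  "var_sum z (x # y # xs) = norm (z y - z x) + var_sum z (y # xs)"
| "var_sum z _ = 0"

definition partitions :: "real \<Rightarrow> real \<Rightarrow> real list set" where
  "partitions a b = {p. p \<noteq> [] \<and> sorted p \<and> hd p = a \<and> last p = b}"

lemma var_sum_eq_sum: "(\<Sum>i < length p - 1. norm (z (p ! Suc i) - z (p ! i))) = var_sum z p"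
proof (induction z p rule: var_sum.induct)
  case (1 z x y xs)
  have "(\<Sum>i < length (x # y # xs) - 1. norm (z ((x # y # xs) ! Suc i) - z ((x # y # xs) ! i)))
      = norm (z y - z x) + (\<Sum>i < length (y # xs) - 1. norm (z ((y # xs) ! Suc i) - z ((y # xs) ! i)))"
    by (simp add: sum.lessThan_Suc_shift del: sum.lessThan_Suc)
  then show ?case using 1 by simp
qed auto

lemma total_variation_partitions:
  "total_variation z a b = (if a \<le> b then (SUP p \<in> partitions a b. var_sum z p) else 0)"
  unfolding total_variation_def partitions_def var_sum_eq_sum by simp

lemma bounded_variation_partitions:
  "bounded_variation_on z a b \<longleftrightarrow> bdd_above (var_sum z ` partitions a b)"
  unfolding bounded_variation_on_def partitions_def var_sum_eq_sum by simp

lemma var_sum_nonneg: "var_sum z p \<ge> 0"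
  by (induction z p rule: var_sum.induct) auto

lemma var_sum_const_points: "(\<And>x. x \<in> set p \<Longrightarrow> x = a) \<Longrightarrow> var_sum z p = 0"
  by (induction z p rule: var_sum.induct) auto

lemma var_sum_shift: "(\<And>x. x \<in> set p \<Longrightarrow> z x = c + z' x) \<Longrightarrow> var_sum z p = var_sum z' p"
  by (induction z p rule: var_sum.induct) (auto simp: algebra_simps)

lemma var_sum_snoc: "xs \<noteq> [] \<Longrightarrow> var_sum z (xs @ [y]) = var_sum z xs + norm (z y - z (last xs))"
proof (induction xs)
  case (Cons a xs)
  then show ?case by (cases xs) auto
qed simp

lemma var_sum_append: "var_sum z (xs @ y # ys) = var_sum z (xs @ [y]) + var_sum z (y # ys)"
proof (induction xs)
  case (Cons a xs)
  then show ?case by (cases xs) auto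
qed simp

lemma var_sum_insert_point:
  assumes "ys \<noteq> []"
  shows "var_sum z (xs @ ys) \<le> var_sum z (xs @ [m]) + var_sum z (m # ys)"
proof -
  obtain y ys' where ys: "ys = y # ys'" using assms by (cases ys) auto
  have right: "var_sum z (m # ys) = norm (z y - z m) + var_sum z ys" unfolding ys by simp
  show ?thesis
  proof (cases "xs = []")
    case False
    have "var_sum z (xs @ ys) = var_sum z xs + norm (z y - z (last xs)) + var_sum z ys"
      using var_sum_append[of z xs y ys'] var_sum_snoc[OF False, of z y] ys by simp
    moreover have "var_sum z (xs @ [m]) = var_sum z xs + norm (z m - z (last xs))"
      by (rule var_sum_snoc[OF False])
    moreover have "norm (z y - z (last xs)) \<le> norm (z m - z (last xs)) + norm (z y - z m)"
      using norm_triangle_ineq[of "z m - z (last xs)" "z y - z m"] by simp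
    ultimately show ?thesis using right by linarith
  qed (simp add: ys right)
qed

lemma sorted_hd_last_bounds: "sorted p \<Longrightarrow> p \<noteq> [] \<Longrightarrow> x \<in> set p \<Longrightarrow> hd p \<le> x \<and> x \<le> last p"
proof (induction p)
  case (Cons y ys)
  then show ?case by (cases ys) auto
qed simp

lemma partitions_points: "p \<in> partitions a b \<Longrightarrow> set p \<subseteq> {a..b}"
  unfolding partitions_def using sorted_hd_last_bounds by fastforce

lemma partitions_le: "p \<in> partitions a b \<Longrightarrow> a \<le> b"
  unfolding partitions_def using sorted_hd_last_bounds[of p "hd p"] by (cases p) auto

lemma partitions_two: "a \<le> b \<Longrightarrow> [a, b] \<in> partitions a b"
  unfolding partitions_def by auto

lemma sorted_filter_split:
  "sorted r \<Longrightarrow> filter (\<lambda>x. x < m) r @ filter (\<lambda>x. \<not> x < m) r = (r::real list)"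
proof (induction r)
  case (Cons x xs)
  show ?case
  proof (cases "x < m")
    case False
    then have "\<forall>y\<in>set xs. \<not> y < m" using Cons.prems by auto
    then show ?thesis using False by (simp add: filter_empty_conv)
  qed (use Cons in auto)
qed simp

lemma last_filter_last: "r \<noteq> [] \<Longrightarrow> P (last r) \<Longrightarrow> last (filter P r) = last r"
  by (metis append_butlast_last_id filter.simps filter_append last_snoc)

lemma partitions_cut:
  assumes r: "r \<in> partitions a b" and m: "a \<le> m" "m \<le> b"
  shows "filter (\<lambda>x. x < m) r @ [m] \<in> partitions a m"
    and "m # filter (\<lambda>x. \<not> x < m) r \<in> partitions m b"
    and "var_sum z r \<le> var_sum z (filter (\<lambda>x. x < m) r @ [m]) + var_sum z (m # filter (\<lambda>x. \<not> x < m) r)"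
proof -
  have rs: "sorted r" "r \<noteq> []" "hd r = a" "last r = b" using r unfolding partitions_def by auto
  have "b \<in> set (filter (\<lambda>x. \<not> x < m) r)" using rs m by auto
  then have ne: "filter (\<lambda>x. \<not> x < m) r \<noteq> []" by (metis empty_iff list.set(1))
  have hd: "hd (filter (\<lambda>x. x < m) r @ [m]) = a"
  proof (cases "a < m")
    case True
    then show ?thesis using rs by (cases r) auto
  next
    case False
    then have "filter (\<lambda>x. x < m) r = []" using partitions_points[OF r] m by (auto simp: filter_empty_conv)
    then show ?thesis using False m by simp
  qed
  show "filter (\<lambda>x. x < m) r @ [m] \<in> partitions a m"
    unfolding partitions_def using hd rs by (auto simp: sorted_append sorted_wrt_filter less_imp_le)
  have "last (filter (\<lambda>x. \<not> x < m) r) = b"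
    using last_filter_last[of r "\<lambda>x. \<not> x < m"] rs m by simp
  then show "m # filter (\<lambda>x. \<not> x < m) r \<in> partitions m b"
    unfolding partitions_def using ne rs by (auto simp: sorted_wrt_filter)
  have "filter (\<lambda>x. x < m) r @ filter (\<lambda>x. \<not> x < m) r = r"
    using sorted_filter_split[OF rs(1)] .
  then show "var_sum z r \<le> var_sum z (filter (\<lambda>x. x < m) r @ [m]) + var_sum z (m # filter (\<lambda>x. \<not> x < m) r)"
    using var_sum_insert_point[OF ne, of z "filter (\<lambda>x. x < m) r" m] by simp
qed

lemma partitions_join:
  assumes p: "p \<in> partitions a m" and q: "q \<in> partitions m b"
  shows "butlast p @ q \<in> partitions a b" "var_sum z (butlast p @ q) = var_sum z p + var_sum z q"
proof -
  have ps: "sorted p" "p \<noteq> []" "hd p = a" "last p = m" using p unfolding partitions_def by auto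
  have qs: "sorted q" "q \<noteq> []" "hd q = m" "last q = b" using q unfolding partitions_def by auto
  have pe: "p = butlast p @ [m]" using ps append_butlast_last_id by metis
  have qe: "q = m # tl q" using qs by (cases q) auto
  have "set (butlast p) \<subseteq> {a..m}" using partitions_points[OF p] by (meson in_set_butlastD subset_iff)
  moreover have "set q \<subseteq> {m..b}" using partitions_points[OF q] .
  moreover have "sorted (butlast p)" using ps by (metis sorted_butlast)
  ultimately have "sorted (butlast p @ q)" using qs unfolding sorted_append
    by (meson atLeastAtMost_iff order_trans subsetD)
  moreover have "hd (butlast p @ q) = a"
  proof (cases "butlast p = []")
    case True
    then show ?thesis using pe ps(3) qs(3) by (metis append_Nil hd_append list.sel(1))
  next
    case False
    then show ?thesis using ps pe by (metis hd_append2)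
  qed
  ultimately show "butlast p @ q \<in> partitions a b" unfolding partitions_def using qs by auto
  have "var_sum z (butlast p @ q) = var_sum z (butlast p @ [m]) + var_sum z (m # tl q)"
    using var_sum_append[of z "butlast p" m "tl q"] qe by simp
  then show "var_sum z (butlast p @ q) = var_sum z p + var_sum z q"
    using pe qe by simp
qed

lemma var_sum_le_total_variation:
  "bounded_variation_on z a b \<Longrightarrow> p \<in> partitions a b \<Longrightarrow> var_sum z p \<le> total_variation z a b"
  unfolding total_variation_partitions bounded_variation_partitions
  using partitions_le by (auto intro: cSUP_upper)

lemma total_variation_le:
  "a \<le> b \<Longrightarrow> (\<And>p. p \<in> partitions a b \<Longrightarrow> var_sum z p \<le> B) \<Longrightarrow> total_variation z a b \<le> B"
  unfolding total_variation_partitions using partitions_two[of a b] by (auto intro!: cSUP_least)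

lemma total_variation_empty: "\<not> a \<le> b \<Longrightarrow> total_variation z a b = 0"
  by (simp add: total_variation_partitions)

lemma total_variation_nonneg: "bounded_variation_on z a b \<Longrightarrow> 0 \<le> total_variation z a b"
  using var_sum_le_total_variation[OF _ partitions_two, of z a b] var_sum_nonneg[of z "[a,b]"]
  by (cases "a \<le> b") (simp_all add: total_variation_empty del: var_sum.simps)

lemma total_variation_refl: "total_variation z a a = 0"
proof -
  have "(SUP p \<in> partitions a a. var_sum z p) = (SUP p \<in> partitions a a. 0::real)"
    using partitions_points by (intro SUP_cong refl var_sum_const_points) fastforce
  also have "\<dots> = 0"
  proof -
    have "partitions a a \<noteq> {}" using partitions_two[of a a] by blast
    then show ?thesis by simp
  qed
  finally show ?thesis by (simp add: total_variation_partitions)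
qed

lemma bounded_variation_split:
  assumes m: "a \<le> m" "m \<le> b"
  shows "bounded_variation_on z a b \<longleftrightarrow> bounded_variation_on z a m \<and> bounded_variation_on z m b"
proof
  assume "bounded_variation_on z a b"
  then obtain B where B: "\<And>p. p \<in> partitions a b \<Longrightarrow> var_sum z p \<le> B"
    unfolding bounded_variation_partitions bdd_above_def by auto
  have "var_sum z p \<le> B" if "p \<in> partitions a m" for p
  proof -
    note join = partitions_join[OF that partitions_two[OF m(2)]]
    show ?thesis using B[OF join(1)] join(2)[of z] var_sum_nonneg[of z "[m,b]"] by linarith
  qed
  moreover have "var_sum z q \<le> B" if "q \<in> partitions m b" for q
  proof -
    note join = partitions_join[OF partitions_two[OF m(1)] that]
    show ?thesis using B[OF join(1)] join(2)[of z] var_sum_nonneg[of z "[a,m]"] by linarith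
  qed
  ultimately show "bounded_variation_on z a m \<and> bounded_variation_on z m b"
    unfolding bounded_variation_partitions by (meson bdd_aboveI2)
next
  assume "bounded_variation_on z a m \<and> bounded_variation_on z m b"
  then have "var_sum z r \<le> total_variation z a m + total_variation z m b" if "r \<in> partitions a b" for r
    using partitions_cut[OF that m] partitions_cut(3)[OF that m, of z] var_sum_le_total_variation[of z a m]
      var_sum_le_total_variation[of z m b] by fastforce
  then show "bounded_variation_on z a b"
    unfolding bounded_variation_partitions by (meson bdd_aboveI2)
qed

lemma bounded_variation_subinterval:
  "bounded_variation_on z a b \<Longrightarrow> a \<le> c \<Longrightarrow> c \<le> d \<Longrightarrow> d \<le> b \<Longrightarrow> bounded_variation_on z c d"
  using bounded_variation_split by (meson order_trans)

lemma total_variation_split: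
  assumes m: "a \<le> m" "m \<le> b" and bv: "bounded_variation_on z a b"
  shows "total_variation z a b = total_variation z a m + total_variation z m b"
proof -
  have bv1: "bounded_variation_on z a m" and bv2: "bounded_variation_on z m b"
    using bv bounded_variation_split[OF m] by auto
  have "total_variation z a b \<le> total_variation z a m + total_variation z m b"
  proof (rule total_variation_le)
    fix r assume r: "r \<in> partitions a b"
    show "var_sum z r \<le> total_variation z a m + total_variation z m b"
      using partitions_cut[OF r m] partitions_cut(3)[OF r m, of z] var_sum_le_total_variation[OF bv1]
        var_sum_le_total_variation[OF bv2] by fastforce
  qed (use m in simp)
  moreover have "total_variation z a m \<le> total_variation z a b - total_variation z m b"
  proof (rule total_variation_le)
    fix p assume p: "p \<in> partitions a m"
    have "total_variation z m b \<le> total_variation z a b - var_sum z p"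
    proof (rule total_variation_le)
      fix q assume q: "q \<in> partitions m b"
      show "var_sum z q \<le> total_variation z a b - var_sum z p"
        using partitions_join[OF p q] partitions_join(2)[OF p q, of z] var_sum_le_total_variation[OF bv, of "butlast p @ q"]
        by linarith
    qed (use m in simp)
    then show "var_sum z p \<le> total_variation z a b - total_variation z m b" by linarith
  qed (use m in simp)
  ultimately show ?thesis by linarith
qed

lemma total_variation_shift:
  assumes "\<And>x. x \<in> {a..b} \<Longrightarrow> z x = c + z' x"
  shows "total_variation z a b = total_variation z' a b"
    and "bounded_variation_on z a b \<longleftrightarrow> bounded_variation_on z' a b"
proof -
  have "var_sum z ` partitions a b = var_sum z' ` partitions a b"
    using partitions_points assms by (intro image_cong refl var_sum_shift) blast
  then show "total_variation z a b = total_variation z' a b"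
    and "bounded_variation_on z a b \<longleftrightarrow> bounded_variation_on z' a b"
    unfolding total_variation_partitions bounded_variation_partitions by (simp_all add: image_image)
qed

text \<open>The cumulative variation r \<mapsto> V(z; t, min r T) of z on [t,T]. It is the distribution
  function of the Lebesgue-Stieltjes measure driving the reflection term in refl_sol.\<close>

abbreviation cum_variation :: "(real \<Rightarrow> 'a::real_normed_vector) \<Rightarrow> real \<Rightarrow> real \<Rightarrow> real \<Rightarrow> real" where
  "cum_variation z t T \<equiv> \<lambda>r. total_variation z t (min r T)"

lemma cum_variation_mono:
  assumes bv: "bounded_variation_on z t T" and xy: "x \<le> y"
  shows "cum_variation z t T x \<le> cum_variation z t T y"
proof (cases "t \<le> min x T")
  case False
  have "bounded_variation_on z t (min y T)"
  proof (cases "t \<le> min y T")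
    case True
    then show ?thesis using bounded_variation_subinterval[OF bv order_refl True] by simp
  next
    case False
    then have "partitions t (min y T) = {}" using partitions_le by blast
    then show ?thesis unfolding bounded_variation_partitions by simp
  qed
  then show ?thesis using False total_variation_empty total_variation_nonneg by metis
next
  case True
  have bv1: "bounded_variation_on z t (min y T)"
    using bounded_variation_subinterval[OF bv order_refl, of "min y T"] True xy by simp
  have "total_variation z t (min y T)
      = total_variation z t (min x T) + total_variation z (min x T) (min y T)"
    using total_variation_split[OF True _ bv1] xy by simp
  moreover have "bounded_variation_on z (min x T) (min y T)"
    using bounded_variation_subinterval[OF bv1 True, of "min y T"] xy by (simp add: min_def)
  ultimately show ?thesis using total_variation_nonneg by fastforce
qed

text \<open>A continuous path of bounded variation has small variation on short intervals
  [r, r + d]: a near-optimal partition, refined at a point close to r, controls it.\<close>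
lemma total_variation_small:
  assumes cont: "continuous_on {r..T} z" and bv: "bounded_variation_on z r T"
    and rT: "r < T" and e: "e > 0"
  shows "\<exists>d>0. r + d \<le> T \<and> total_variation z r (r + d) < e"
proof -
  define V where "V = total_variation z r T"
  have "V - e/2 < (SUP p \<in> partitions r T. var_sum z p)"
    using rT e unfolding V_def total_variation_partitions by simp
  then obtain p where p: "p \<in> partitions r T" "V - e/2 < var_sum z p"
    using less_cSUP_iff[OF _ bv[unfolded bounded_variation_partitions]] partitions_two[of r T] rT
    by fastforce
  obtain d1 where d1: "d1 > 0" "\<And>y. y \<in> {r..T} \<Longrightarrow> dist y r < d1 \<Longrightarrow> dist (z y) (z r) < e/2"
    using cont rT e unfolding continuous_on_iff
    by (metis atLeastAtMost_iff half_gt_zero less_imp_le order_refl)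
  text \<open>Choose m \<in> (r, r + d1) to the left of all points of p other than r.\<close>
  define S where "S = {x \<in> set p. r < x}"
  have TS: "T \<in> S" using p(1) rT unfolding S_def partitions_def by auto
  have finS: "finite S" unfolding S_def by simp
  define m where "m = r + min (d1/2) (Min S - r)"
  have "Min S \<in> S" using Min_in[OF finS] TS by auto
  then have rm: "r < m" using d1 unfolding m_def S_def by auto
  have mS: "\<And>x. x \<in> S \<Longrightarrow> m \<le> x" using Min_le[OF finS] unfolding m_def by fastforce
  have mT: "m \<le> T" using mS[OF TS] .
  have left_points: "\<And>x. x \<in> set (filter (\<lambda>x. x < m) p) \<Longrightarrow> x = r"
    using partitions_points[OF p(1)] mS unfolding S_def by force
  have "hd p \<in> set p" "hd p = r" using p(1) unfolding partitions_def by auto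
  then have "r \<in> set (filter (\<lambda>x. x < m) p)" using rm by auto
  then have left_ne: "filter (\<lambda>x. x < m) p \<noteq> []" by (metis empty_iff list.set(1))
  have "var_sum z (filter (\<lambda>x. x < m) p @ [m]) = norm (z m - z r)"
    using var_sum_snoc[OF left_ne, of z m] var_sum_const_points[of "filter (\<lambda>x. x < m) p" r z] left_points
      left_points[OF last_in_set[OF left_ne]] by simp
  moreover have "var_sum z (m # filter (\<lambda>x. \<not> x < m) p) \<le> total_variation z m T"
    using var_sum_le_total_variation[OF bounded_variation_subinterval[OF bv _ mT]] 
      partitions_cut(2)[OF p(1) _ mT] rm by simp
  ultimately have "var_sum z p \<le> norm (z m - z r) + total_variation z m T"
    using partitions_cut(3)[OF p(1) _ mT, of z] rm by simp
  moreover have "norm (z m - z r) < e/2"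
  proof -
    have "m - r < d1" using d1(1) unfolding m_def by linarith
    then show ?thesis using d1(2)[of m] rm mT by (simp add: dist_norm dist_real_def)
  qed
  moreover have "V = total_variation z r m + total_variation z m T"
    unfolding V_def using total_variation_split[OF _ mT bv] rm by simp
  ultimately have "total_variation z r m < e" using p(2) by linarith
  then show ?thesis using rm mT by (intro exI[of _ "m - r"]) auto
qed

lemma cum_variation_right_cont:
  assumes cont: "continuous_on {t..T} z" and bv: "bounded_variation_on z t T"
  shows "continuous (at_right a) (cum_variation z t T)"
proof -
  define F where "F = cum_variation z t T"
  have "\<exists>d>0. F (a + d) - F a < e" if e: "e > 0" for e
  proof (cases "a < t")
    case True
    have "a + (t - a)/2 < t" using True by (simp add: field_simps)
    then have "\<not> t \<le> min (a + (t - a)/2) T" "\<not> t \<le> min a T" using True by auto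
    then have "F (a + (t - a)/2) = 0" "F a = 0" unfolding F_def by (simp_all add: total_variation_empty)
    then show ?thesis using True e by (intro exI[of _ "(t - a)/2"]) auto
  next
    case False
    show ?thesis
    proof (cases "a < T")
      case False
      then show ?thesis using e unfolding F_def by (intro exI[of _ 1]) auto
    next
      case True
      have ta: "t \<le> a" using \<open>\<not> a < t\<close> by simp
      obtain d where d: "d > 0" "a + d \<le> T" "total_variation z a (a + d) < e"
        using total_variation_small[OF continuous_on_subset[OF cont]
            bounded_variation_subinterval[OF bv ta _ order_refl] True e] ta True
        by auto
      have "bounded_variation_on z t (a + d)"
        using bounded_variation_subinterval[OF bv order_refl _ d(2)] ta d by simp
      then have "total_variation z t (a + d) = total_variation z t a + total_variation z a (a + d)"
        using total_variation_split[OF ta, of "a + d" z] d by simp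
      then show ?thesis using d True unfolding F_def by (intro exI[of _ d]) auto
    qed
  qed
  then show ?thesis
    using continuous_at_right_real_increasing[of F a] cum_variation_mono[OF bv] unfolding F_def
    by blast
qed

section \<open>Lebesgue-Stieltjes integrals\<close>

definition stieltjes_fn :: "(real \<Rightarrow> real) \<Rightarrow> bool" where
  "stieltjes_fn F \<longleftrightarrow> (\<forall>x y. x \<le> y \<longrightarrow> F x \<le> F y) \<and> (\<forall>a. continuous (at_right a) F)"

lemma stieltjes_fnD:
  assumes "stieltjes_fn F"
  shows "\<And>x y. x \<le> y \<Longrightarrow> F x \<le> F y" and "\<And>a. continuous (at_right a) F"
  using assms unfolding stieltjes_fn_def by auto

lemma stieltjes_fn_id: "stieltjes_fn (\<lambda>x. x)"
  unfolding stieltjes_fn_def by (auto intro: continuous_ident)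

lemma stieltjes_fn_cum_variation:
  "continuous_on {t..T} z \<Longrightarrow> bounded_variation_on z t T \<Longrightarrow> stieltjes_fn (cum_variation z t T)"
  unfolding stieltjes_fn_def using cum_variation_mono cum_variation_right_cont by blast

lemma measurable_interval_measure: "measurable (interval_measure F) N = measurable borel N"
  by (rule measurable_cong_sets) simp_all

lemma emeasure_interval_measure_Ioc_finite:
  "stieltjes_fn F \<Longrightarrow> emeasure (interval_measure F) {a<..b} < \<infinity>"
  using emeasure_interval_measure_Ioc_eq[of F a b] by (simp add: stieltjes_fnD less_top[symmetric])

lemma emeasure_interval_measure_point:
  assumes F: "stieltjes_fn F" and "F c = F (c - 1)"
  shows "emeasure (interval_measure F) {c} = 0"
proof -
  have "emeasure (interval_measure F) {c} \<le> emeasure (interval_measure F) {c - 1<..c}"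
    by (rule emeasure_mono) auto
  also have "\<dots> = 0" using assms by (simp add: emeasure_interval_measure_Ioc stieltjes_fnD)
  finally show ?thesis by simp
qed

lemma set_integral_null_point:
  fixes f :: "'a \<Rightarrow> 'b::{banach, second_countable_topology}"
  assumes "{c} \<in> sets M" "emeasure M {c} = 0"
  shows "(LINT u:{c}|M. f u) = 0"
  using set_integral_discrete_difference[of "{c}" "{c}" "{}" M f] assms
  by (simp add: set_lebesgue_integral_def)

lemma set_integrable_interval_measure_bounded:
  fixes g :: "real \<Rightarrow> 'b::{banach, second_countable_topology}"
  assumes F: "stieltjes_fn F" and A: "A \<in> sets borel" "A \<subseteq> {a<..b}"
    and g: "set_borel_measurable borel A g" and bnd: "\<And>u. u \<in> A \<Longrightarrow> norm (g u) \<le> B"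
  shows "set_integrable (interval_measure F) A g"
  unfolding set_integrable_def
proof (rule integrableI_bounded_set[where A=A and B=B])
  have "emeasure (interval_measure F) A \<le> emeasure (interval_measure F) {a<..b}"
    by (rule emeasure_mono) (use A in auto)
  then show "emeasure (interval_measure F) A < \<infinity>"
    using emeasure_interval_measure_Ioc_finite[OF F, of a b] by simp
qed (use A g bnd in \<open>auto simp: measurable_interval_measure set_borel_measurable_def\<close>)

text \<open>Distribution functions differing by a constant on [a,b] define the same measure on
  (a,b], hence the same integrals over subsets of (a,b].\<close>
lemma set_integral_interval_measure_shift:
  fixes g :: "real \<Rightarrow> 'b::{banach, second_countable_topology}"
  assumes F: "stieltjes_fn F" and G: "stieltjes_fn G"
    and eq: "\<And>x. x \<in> {a..b} \<Longrightarrow> F x = G x + c" and ab: "a \<le> b"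
    and A: "A \<in> sets borel" "A \<subseteq> {a<..b}" and g: "set_borel_measurable borel A g"
  shows "(LINT u:A|interval_measure F. g u) = (LINT u:A|interval_measure G. g u)"
proof -
  define S where "S = {a<..b}"
  have S: "S \<in> sets borel" unfolding S_def by simp
  let ?restr = "\<lambda>H. density (interval_measure H) (indicator S)"
  have emeasure_restr: "emeasure (?restr H) {x<..} = emeasure (interval_measure H) (S \<inter> {x<..})" for H x
    by (rule emeasure_restricted) (simp_all add: S)
  have S_Ioi: "S \<inter> {x<..} = (if x < b then {max a x<..b} else {})" for x
    unfolding S_def by auto
  have restr_eq: "?restr F = ?restr G"
  proof (rule measure_eqI_lessThan)
    fix x
    show "emeasure (?restr F) {x<..} < \<infinity>"
      unfolding emeasure_restr S_Ioi using emeasure_interval_measure_Ioc_finite[OF F] by simp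
    show "emeasure (?restr F) {x<..} = emeasure (?restr G) {x<..}"
    proof (cases "x < b")
      case True
      have "max a x \<in> {a..b}" "b \<in> {a..b}" using True ab by (auto simp: max_def)
      then have "F b - F (max a x) = G b - G (max a x)" using eq by simp
      then show ?thesis unfolding emeasure_restr S_Ioi using True ab
        by (simp add: emeasure_interval_measure_Ioc stieltjes_fnD[OF F] stieltjes_fnD[OF G])
    qed (simp add: emeasure_restr S_Ioi)
  qed simp_all
  have "(LINT u:A|interval_measure H. g u) = integral\<^sup>L (?restr H) (\<lambda>u. indicator A u *\<^sub>R g u)" for H
  proof -
    have ind: "indicator S u *\<^sub>R (indicator A u *\<^sub>R g u) = indicator A u *\<^sub>R g u" for u
      using A(2) unfolding S_def by (auto split: split_indicator)
    have "integral\<^sup>L (density (interval_measure H) (\<lambda>x. ennreal (indicator S x)))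
          (\<lambda>u. indicator A u *\<^sub>R g u)
        = integral\<^sup>L (interval_measure H) (\<lambda>u. indicator S u *\<^sub>R (indicator A u *\<^sub>R g u))"
      using g by (intro integral_density)
        (auto simp: measurable_interval_measure S set_borel_measurable_def borel_measurable_indicator)
    then have "integral\<^sup>L (?restr H) (\<lambda>u. indicator A u *\<^sub>R g u)
        = integral\<^sup>L (interval_measure H) (\<lambda>u. indicator S u *\<^sub>R (indicator A u *\<^sub>R g u))"
      by (simp add: ennreal_indicator)
    then show ?thesis unfolding set_lebesgue_integral_def ind by simp
  qed
  then show ?thesis using restr_eq by simp
qed

text \<open>This is used both for the Lebesgue integral of the drift (F = F1 = F2 = id) and for the
  Stieltjes integral of the reflection term.\<close>
lemma set_integral_stieltjes_concat:
  fixes g g1 g2 :: "real \<Rightarrow> 'b::{banach, second_countable_topology}"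
  assumes F: "stieltjes_fn F" and F1: "stieltjes_fn F1" and F2: "stieltjes_fn F2"
    and eq1: "\<And>r. r \<le> \<theta> \<Longrightarrow> F r = F1 r" and eq2: "\<And>r. r \<in> {\<theta>..T} \<Longrightarrow> F r = F2 r + c"
    and null: "emeasure (interval_measure F2) {\<theta>} = 0"
    and int: "set_integrable (interval_measure F) {t..T} g"
    and g1: "\<And>u. u \<le> \<theta> \<Longrightarrow> g u = g1 u" and g2: "\<And>u. \<theta> < u \<Longrightarrow> g u = g2 u"
    and \<theta>: "t \<le> \<theta>" "\<theta> \<le> T"
  shows "s \<in> {t..\<theta>} \<Longrightarrow> (LINT u:{t..s}|interval_measure F. g u) = (LINT u:{t..s}|interval_measure F1. g1 u)"
    and "s \<in> {\<theta>..T} \<Longrightarrow> (LINT u:{t..s}|interval_measure F. g u)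
      = (LINT u:{t..\<theta>}|interval_measure F1. g1 u) + (LINT u:{\<theta>..s}|interval_measure F2. g2 u)"
proof -
  have meas: "set_borel_measurable borel A g" if "A \<in> sets borel" "A \<subseteq> {t..T}" for A
  proof -
    have "(\<lambda>u. indicator {t..T} u *\<^sub>R g u) \<in> borel_measurable borel"
      using int unfolding set_integrable_def by (simp add: measurable_interval_measure)
    then have "(\<lambda>u. indicator A u *\<^sub>R (indicator {t..T} u *\<^sub>R g u)) \<in> borel_measurable borel"
      by (rule borel_measurable_scaleR[OF borel_measurable_indicator[OF that(1)]])
    moreover have "(\<lambda>u. indicator A u *\<^sub>R (indicator {t..T} u *\<^sub>R g u)) = (\<lambda>u. indicator A u *\<^sub>R g u)"
      using that by (intro ext) (auto split: split_indicator)
    ultimately show ?thesis unfolding set_borel_measurable_def by simp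
  qed
  show left: "(LINT u:{t..s}|interval_measure F. g u) = (LINT u:{t..s}|interval_measure F1. g1 u)"
    if s: "s \<in> {t..\<theta>}" for s
  proof -
    have "(LINT u:{t..s}|interval_measure F. g u) = (LINT u:{t..s}|interval_measure F1. g u)"
      using s \<theta> eq1 by (intro set_integral_interval_measure_shift[OF F F1, of "t - 1" \<theta> 0] meas) auto
    also have "\<dots> = (LINT u:{t..s}|interval_measure F1. g1 u)"
      using s g1 by (intro set_lebesgue_integral_cong) auto
    finally show ?thesis .
  qed
  assume s: "s \<in> {\<theta>..T}"
  have "(LINT u:{t..s}|interval_measure F. g u)
      = (LINT u:{t..\<theta>}|interval_measure F. g u) + (LINT u:{\<theta><..s}|interval_measure F. g u)"
  proof -
    have "{t..s} = {t..\<theta>} \<union> {\<theta><..s}" using s \<theta> by auto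
    then show ?thesis
      using s by (simp only:) (intro set_integral_Un set_integrable_subset[OF int]; auto)
  qed
  also have "(LINT u:{\<theta><..s}|interval_measure F. g u) = (LINT u:{\<theta><..s}|interval_measure F2. g u)"
    using s \<theta> eq2 by (intro set_integral_interval_measure_shift[OF F F2, of \<theta> s c] meas) auto
  also have "\<dots> = (LINT u:{\<theta><..s}|interval_measure F2. g2 u)"
    using g2 by (intro set_lebesgue_integral_cong) auto
  also have "\<dots> = (LINT u:{\<theta>..s}|interval_measure F2. g2 u)"
    using null by (intro set_integral_discrete_difference[of "{\<theta>}"]) auto
  finally show "(LINT u:{t..s}|interval_measure F. g u)
      = (LINT u:{t..\<theta>}|interval_measure F1. g1 u) + (LINT u:{\<theta>..s}|interval_measure F2. g2 u)"
    using left[of \<theta>] \<theta> by simp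
qed

section \<open>Controls and drift\<close>

lemma set_integral_lborel_concat:
  fixes g g1 g2 :: "real \<Rightarrow> 'b::{banach, second_countable_topology}"
  assumes int: "set_integrable lborel {t..T} g"
    and g1: "\<And>u. u \<le> \<theta> \<Longrightarrow> g u = g1 u" and g2: "\<And>u. \<theta> < u \<Longrightarrow> g u = g2 u"
    and \<theta>: "t \<le> \<theta>" "\<theta> \<le> T" and s: "s \<in> {\<theta>..T}"
  shows "(LINT u:{t..s}|lborel. g u) = (LINT u:{t..\<theta>}|lborel. g1 u) + (LINT u:{\<theta>..s}|lborel. g2 u)"
  using set_integral_stieltjes_concat(2)[OF stieltjes_fn_id stieltjes_fn_id stieltjes_fn_id,
      folded lborel_eq_real, of \<theta> T 0 t g g1 g2 s] assms by simp

lemma L2_zero: "(\<lambda>_. 0) \<in> L2 t T"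
  unfolding L2_def set_borel_measurable_def set_integrable_def by simp

lemma L2_integrable:
  fixes \<alpha> :: "real \<Rightarrow> real^'m"
  assumes "\<alpha> \<in> L2 t T"
  shows "set_integrable lborel {t..T} \<alpha>"
proof -
  have meas: "(\<lambda>u. indicator {t..T} u *\<^sub>R \<alpha> u) \<in> borel_measurable lborel"
    using assms unfolding L2_def set_borel_measurable_def by simp
  have "set_integrable lborel {t..T} (\<lambda>s. 1::real)"
    unfolding set_integrable_def
    by (rule integrableI_bounded_set_indicator[where B=1]) (auto simp: emeasure_lborel_Icc_eq)
  then have "set_integrable lborel {t..T} (\<lambda>s. 1 + (norm (\<alpha> s))\<^sup>2)"
    using assms unfolding L2_def by (intro set_integral_add) auto
  moreover have "norm (\<alpha> x) \<le> 1 + (norm (\<alpha> x))\<^sup>2" for x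
    by (smt (verit) power2_eq_square mult_le_cancel_left1 norm_ge_zero zero_le_power2)
  ultimately show ?thesis
    unfolding set_integrable_def
    by (intro Bochner_Integration.integrable_bound[OF _ meas] AE_I2) (auto split: split_indicator)
qed

lemma L2_restrict:
  assumes a: "\<alpha> \<in> L2 t T" and tr: "t \<le> r"
  shows "\<alpha> \<in> L2 r T"
proof -
  have meas: "(\<lambda>u. indicator {t..T} u *\<^sub>R \<alpha> u) \<in> borel_measurable lborel"
    and int: "set_integrable lborel {t..T} (\<lambda>s. (norm (\<alpha> s))\<^sup>2)"
    using a unfolding L2_def set_borel_measurable_def by auto
  have "(\<lambda>u. indicator {r..T} u *\<^sub>R \<alpha> u) = (\<lambda>u. indicator {r..T} u *\<^sub>R (indicator {t..T} u *\<^sub>R \<alpha> u))"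
    using tr by (auto split: split_indicator)
  then have "(\<lambda>u. indicator {r..T} u *\<^sub>R \<alpha> u) \<in> borel_measurable lborel"
    using borel_measurable_scaleR[OF borel_measurable_indicator meas] by simp
  moreover have "set_integrable lborel {r..T} (\<lambda>s. (norm (\<alpha> s))\<^sup>2)"
    by (rule set_integrable_subset[OF int]) (use tr in auto)
  ultimately show ?thesis unfolding L2_def set_borel_measurable_def by simp
qed

lemma L2_concat:
  fixes \<alpha> \<beta> :: "real \<Rightarrow> real^'m"
  assumes a: "\<alpha> \<in> L2 t T" and b: "\<beta> \<in> L2 r T" and tr: "t \<le> r"
  shows "(\<lambda>u. if u \<le> r then \<alpha> u else \<beta> u) \<in> L2 t T"
proof -
  define c where "c = (\<lambda>u. if u \<le> r then \<alpha> u else \<beta> u)"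
  have ma: "(\<lambda>u. indicator {t..T} u *\<^sub>R \<alpha> u) \<in> borel_measurable lborel"
    and ia: "set_integrable lborel {t..T} (\<lambda>s. (norm (\<alpha> s))\<^sup>2)"
    using a unfolding L2_def set_borel_measurable_def by auto
  have mb: "(\<lambda>u. indicator {r..T} u *\<^sub>R \<beta> u) \<in> borel_measurable lborel"
    and ib: "set_integrable lborel {r..T} (\<lambda>s. (norm (\<beta> s))\<^sup>2)"
    using b unfolding L2_def set_borel_measurable_def by auto
  have split: "(\<lambda>u. indicator {t..T} u *\<^sub>R c u) = (\<lambda>u. indicator {t..r} u *\<^sub>R (indicator {t..T} u *\<^sub>R \<alpha> u)
      + indicator {r<..T} u *\<^sub>R (indicator {r..T} u *\<^sub>R \<beta> u))"
    using tr unfolding c_def by (auto split: split_indicator)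
  have "(\<lambda>u. indicator {t..T} u *\<^sub>R c u) \<in> borel_measurable lborel"
    unfolding split
    by (intro borel_measurable_add borel_measurable_scaleR[OF borel_measurable_indicator ma]
        borel_measurable_scaleR[OF borel_measurable_indicator mb]) simp_all
  moreover have "set_integrable lborel {t..T} (\<lambda>s. (norm (c s))\<^sup>2)"
  proof (cases "r \<le> T")
    case True
    have "set_integrable lborel {t..r} (\<lambda>s. (norm (\<alpha> s))\<^sup>2)"
      by (rule set_integrable_subset[OF ia]) (use True in auto)
    then have "set_integrable lborel {t..r} (\<lambda>s. (norm (c s))\<^sup>2)"
      by (subst set_integrable_cong[OF refl refl, of _ _ "\<lambda>s. (norm (\<alpha> s))\<^sup>2"]) (auto simp: c_def)
    moreover have "set_integrable lborel {r<..T} (\<lambda>s. (norm (\<beta> s))\<^sup>2)"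
      by (rule set_integrable_subset[OF ib]) auto
    then have "set_integrable lborel {r<..T} (\<lambda>s. (norm (c s))\<^sup>2)"
      by (subst set_integrable_cong[OF refl refl, of _ _ "\<lambda>s. (norm (\<beta> s))\<^sup>2"]) (auto simp: c_def)
    moreover have "{t..T} = {t..r} \<union> {r<..T}" using tr True by auto
    ultimately show ?thesis by (simp only:) (rule set_integrable_Un; simp)
  next
    case False
    then show ?thesis using ia
      by (subst set_integrable_cong[OF refl refl, of _ _ "\<lambda>s. (norm (\<alpha> s))\<^sup>2"]) (auto simp: c_def)
  qed
  ultimately show ?thesis unfolding L2_def set_borel_measurable_def c_def by simp
qed

lemma energy_concat:
  fixes \<alpha> \<beta> :: "real \<Rightarrow> real^'m"
  assumes a: "\<alpha> \<in> L2 t T" and b: "\<beta> \<in> L2 r T" and r: "t \<le> r" "r \<le> M" "M \<le> T"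
  shows "(LINT u:{t..M}|lborel. (norm (if u \<le> r then \<alpha> u else \<beta> u))\<^sup>2)
       = (LINT u:{t..r}|lborel. (norm (\<alpha> u))\<^sup>2) + (LINT u:{r..M}|lborel. (norm (\<beta> u))\<^sup>2)"
  using L2_concat[OF a b r(1)] r
  by (intro set_integral_lborel_concat[of t T _ r]) (auto simp: L2_def)

lemma energy_nonneg: "0 \<le> (LINT u:A|lborel. (norm (\<alpha> u :: real^'m))\<^sup>2)"
  unfolding set_lebesgue_integral_def by (rule integral_nonneg_AE) (auto split: split_indicator)

lemma norm_matrix_vector_mult_le:
  fixes A :: "real^'m^'d"
  shows "norm (A *v x) \<le> real CARD('d) * real CARD('m) * norm A * norm x"
proof -
  have "norm (A *v x) \<le> onorm ((*v) A) * norm x" by (rule onorm) simp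
  also have "onorm ((*v) A) \<le> real CARD('d) * real CARD('m) * norm A"
    by (rule onorm_le_matrix_component,
        rule order_trans[OF component_le_norm_cart Finite_Cartesian_Product.norm_nth_le])
  finally show ?thesis by (simp add: mult_right_mono)
qed

lemma continuous_on_compose_path:
  fixes t T :: real
  assumes f: "continuous_on ({0..T} \<times> C) (\<lambda>(t, x). f t x)"
    and Y: "continuous_on {t..T} Y" "\<And>u. u \<in> {t..T} \<Longrightarrow> Y u \<in> C" and t0: "0 \<le> t"
  shows "continuous_on {t..T} (\<lambda>u. f u (Y u))"
proof -
  have "continuous_on {t..T} (\<lambda>u. (\<lambda>(t, x). f t x) (u, Y u))"
    by (rule continuous_on_compose2[OF f]) (use Y t0 in \<open>auto intro!: continuous_intros\<close>)
  then show ?thesis by simp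
qed

lemma drift_integrable:
  fixes \<alpha> :: "real \<Rightarrow> real^'m" and Y :: "real \<Rightarrow> real^'d" and b :: "real \<Rightarrow> real^'d \<Rightarrow> real^'d"
    and \<sigma> :: "real \<Rightarrow> real^'d \<Rightarrow> real^'m^'d"
  assumes bc: "continuous_on ({0..T} \<times> C) (\<lambda>(t, x). b t x)"
    and sc: "continuous_on ({0..T} \<times> C) (\<lambda>(t, x). \<sigma> t x)"
    and Yc: "continuous_on {t..T} Y" and YC: "\<And>u. u \<in> {t..T} \<Longrightarrow> Y u \<in> C" and t0: "0 \<le> t"
    and \<alpha>: "\<alpha> \<in> L2 t T"
  shows "set_integrable lborel {t..T} (\<lambda>u. b u (Y u) - \<sigma> u (Y u) *v \<alpha> u)"
proof (rule set_integral_diff(1))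
  show "set_integrable lborel {t..T} (\<lambda>u. b u (Y u))"
    by (rule borel_integrable_atLeastAtMost'[OF continuous_on_compose_path[OF bc Yc YC t0]])
  have cs: "continuous_on {t..T} (\<lambda>u. \<sigma> u (Y u))" by (rule continuous_on_compose_path[OF sc Yc YC t0])
  obtain K where "\<forall>u\<in>{t..T}. norm (\<sigma> u (Y u)) \<le> K"
    using compact_imp_bounded[OF compact_continuous_image[OF cs compact_Icc]]
    unfolding bounded_iff by auto
  then have K: "\<And>u. u \<in> {t..T} \<Longrightarrow> norm (\<sigma> u (Y u)) \<le> K" by blast
  have sm: "(\<lambda>u. indicator {t..T} u *\<^sub>R \<sigma> u (Y u)) \<in> borel_measurable lborel"
    using borel_measurable_continuous_on_indicator[OF _ cs] by simp
  have am: "(\<lambda>u. indicator {t..T} u *\<^sub>R \<alpha> u) \<in> borel_measurable lborel"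
    using \<alpha> unfolding L2_def set_borel_measurable_def by simp
  have "(\<lambda>u. indicator {t..T} u *\<^sub>R (\<sigma> u (Y u) *v \<alpha> u))
      = (\<lambda>u. (indicator {t..T} u *\<^sub>R \<sigma> u (Y u)) *v (indicator {t..T} u *\<^sub>R \<alpha> u))"
    by (rule ext) (auto split: split_indicator)
  moreover have "continuous_on UNIV (\<lambda>p::((real^'m^'d) \<times> (real^'m)). fst p *v snd p)"
    unfolding matrix_vector_mult_def by (intro continuous_intros)
  ultimately have pm: "(\<lambda>u. indicator {t..T} u *\<^sub>R (\<sigma> u (Y u) *v \<alpha> u)) \<in> borel_measurable lborel"
    using borel_measurable_continuous_Pair[OF sm am] by simp
  let ?C = "real CARD('d) * real CARD('m) * K"
  have bound: "norm (indicator {t..T} x *\<^sub>R (\<sigma> x (Y x) *v \<alpha> x))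
      \<le> norm (?C * norm (indicator {t..T} x *\<^sub>R \<alpha> x))" for x
  proof (cases "x \<in> {t..T}")
    case True
    have "norm (\<sigma> x (Y x) *v \<alpha> x) \<le> real CARD('d) * real CARD('m) * norm (\<sigma> x (Y x)) * norm (\<alpha> x)"
      by (rule norm_matrix_vector_mult_le)
    also have "\<dots> \<le> ?C * norm (\<alpha> x)"
      using K[OF True] by (intro mult_right_mono mult_left_mono) auto
    finally show ?thesis using True K[OF True] by simp
  qed simp
  have "integrable lborel (\<lambda>u. ?C * norm (indicator {t..T} u *\<^sub>R \<alpha> u))"
    using L2_integrable[OF \<alpha>] unfolding set_integrable_def by (intro integrable_mult_right integrable_norm)
  then show "set_integrable lborel {t..T} (\<lambda>u. \<sigma> u (Y u) *v \<alpha> u)"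
    unfolding set_integrable_def using bound
    by (intro Bochner_Integration.integrable_bound[OF _ pm] AE_I2)
qed

section \<open>The flow property of reflected solutions\<close>

lemma refl_sol_start:
  assumes sol: "refl_sol Dom \<gamma> b \<sigma> T \<theta> y0 \<beta> Y z" and \<theta>T: "\<theta> \<le> T"
  shows "emeasure (interval_measure (cum_variation z \<theta> T)) {\<theta>} = 0" and "z \<theta> = 0" and "Y \<theta> = y0"
proof -
  have zc: "continuous_on {\<theta>..T} z" and bv: "bounded_variation_on z \<theta> T"
    and Y\<theta>: "Y \<theta> = y0 + (LINT u:{\<theta>..\<theta>}|lborel. b u (Y u) - \<sigma> u (Y u) *v \<beta> u) - z \<theta>"
    and z\<theta>: "z \<theta> = (LINT u:{\<theta>..\<theta>}|interval_measure (cum_variation z \<theta> T).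
                   indicator (frontier Dom) (Y u) *\<^sub>R \<gamma> (Y u))"
    using sol \<theta>T unfolding refl_sol_def by auto
  have "cum_variation z \<theta> T (\<theta> - 1) = 0" "cum_variation z \<theta> T \<theta> = 0"
    using \<theta>T by (simp_all add: total_variation_empty total_variation_refl)
  then show null: "emeasure (interval_measure (cum_variation z \<theta> T)) {\<theta>} = 0"
    using emeasure_interval_measure_point[OF stieltjes_fn_cum_variation[OF zc bv]] by simp
  show "z \<theta> = 0" using z\<theta> set_integral_null_point[OF _ null] by simp
  then show "Y \<theta> = y0" using Y\<theta> set_integral_null_point[of \<theta> lborel] by simp
qed

lemma continuous_on_concat:
  fixes t \<theta> T :: real
  assumes "continuous_on {t..\<theta>} f1" "continuous_on {\<theta>..T} f2" "f2 \<theta> = f1 \<theta>" "t \<le> \<theta>" "\<theta> \<le> T"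
  shows "continuous_on {t..T} (\<lambda>u. if u \<le> \<theta> then f1 u else f2 u)"
proof -
  have "{t..T} = {t..\<theta>} \<union> {\<theta>..T}" using ivl_disj_un_two_touch(4)[OF assms(4,5)] by simp
  moreover have "continuous_on {t..\<theta>} (\<lambda>u. if u \<le> \<theta> then f1 u else f2 u)"
    using assms(1) by (rule continuous_on_eq) auto
  moreover have "continuous_on {\<theta>..T} (\<lambda>u. if u \<le> \<theta> then f1 u else f2 u)"
    using assms(2) by (rule continuous_on_eq) (use assms(3) in auto)
  ultimately show ?thesis by (metis closed_atLeastAtMost continuous_on_closed_Un)
qed

lemma cum_variation_concat:
  assumes bv1: "bounded_variation_on z1 t T" and bv2: "bounded_variation_on z2 \<theta> T"
    and z2: "z2 \<theta> = 0" and \<theta>: "t \<le> \<theta>" "\<theta> \<le> T"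
    and z: "z = (\<lambda>u. if u \<le> \<theta> then z1 u else z1 \<theta> + z2 u)"
  shows "bounded_variation_on z t T"
    and "\<And>r. r \<le> \<theta> \<Longrightarrow> cum_variation z t T r = cum_variation z1 t T r"
    and "\<And>r. r \<in> {\<theta>..T} \<Longrightarrow> cum_variation z t T r = cum_variation z2 \<theta> T r + cum_variation z1 t T \<theta>"
proof -
  have "z u = 0 + z1 u" if "u \<le> \<theta>" for u
    using that unfolding z by simp
  then have left: "total_variation z t r = total_variation z1 t r"
    "bounded_variation_on z t r \<longleftrightarrow> bounded_variation_on z1 t r" if "r \<le> \<theta>" for r
    using total_variation_shift[of t r z 0 z1] that by auto
  have "z u = z1 \<theta> + z2 u" if "\<theta> \<le> u" for u
    using that z2 unfolding z by auto
  then have right: "total_variation z \<theta> r = total_variation z2 \<theta> r"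
    "bounded_variation_on z \<theta> r \<longleftrightarrow> bounded_variation_on z2 \<theta> r" for r
    using total_variation_shift[of \<theta> r z "z1 \<theta>" z2] by auto
  show bv: "bounded_variation_on z t T"
    using bounded_variation_split[OF \<theta>, of z] left(2)[of \<theta>] right(2)[of T]
      bounded_variation_subinterval[OF bv1 order_refl \<theta>] bv2 by simp
  show "cum_variation z t T r = cum_variation z1 t T r" if "r \<le> \<theta>" for r
    using left(1)[of "min r T"] that \<theta> by (cases "t \<le> r") (auto simp: total_variation_empty)
  show "cum_variation z t T r = cum_variation z2 \<theta> T r + cum_variation z1 t T \<theta>" if r: "r \<in> {\<theta>..T}" for r
  proof -
    have "total_variation z t r = total_variation z t \<theta> + total_variation z \<theta> r"
      using r \<theta> by (intro total_variation_split bounded_variation_subinterval[OF bv]) auto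
    then show ?thesis using left(1)[of \<theta>] right(1)[of r] r \<theta> by simp
  qed
qed

text \<open>The reflection integrand (the indicator of the boundary at Y times \<gamma>(Y)) of a continuous
  path in the closed domain is bounded and measurable, hence integrable for any Stieltjes measure.\<close>
lemma reflection_integrable:
  fixes Y :: "real \<Rightarrow> real^'d" and \<gamma> :: "real^'d \<Rightarrow> real^'d"
  assumes F: "stieltjes_fn F" and Yc: "continuous_on {t..T} Y"
    and YC: "\<And>u. u \<in> {t..T} \<Longrightarrow> Y u \<in> closure Dom" and \<gamma>: "continuous_on (closure Dom) \<gamma>"
  shows "set_integrable (interval_measure F) {t..T} (\<lambda>u. indicator (frontier Dom) (Y u) *\<^sub>R \<gamma> (Y u))"
proof -
  have "continuous_on {t..T} (\<gamma> \<circ> Y)"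
    using continuous_on_compose[OF Yc continuous_on_subset[OF \<gamma>]] YC by blast
  then have "bounded ((\<gamma> \<circ> Y) ` {t..T})"
    by (intro compact_imp_bounded compact_continuous_image compact_Icc)
  then obtain K where "\<forall>v\<in>(\<gamma> \<circ> Y) ` {t..T}. norm v \<le> K"
    unfolding bounded_iff by blast
  then have bound: "norm (indicator (frontier Dom) (Y u) *\<^sub>R \<gamma> (Y u)) \<le> K" if "u \<in> {t..T}" for u
  proof -
    have "norm (\<gamma> (Y u)) \<le> K" using that \<open>\<forall>v\<in>(\<gamma> \<circ> Y) ` {t..T}. norm v \<le> K\<close> by simp
    moreover have "0 \<le> K" using calculation norm_ge_zero order_trans by blast
    ultimately show ?thesis by (simp split: split_indicator)
  qed
  define G where "G y = indicator (frontier Dom) y *\<^sub>R (indicator (closure Dom) y *\<^sub>R \<gamma> y)" for y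
  have "G \<in> borel_measurable borel"
    unfolding G_def
    by (intro borel_measurable_scaleR borel_measurable_indicator borel_measurable_continuous_on_indicator \<gamma>)
      auto
  moreover have "Y \<in> borel_measurable (restrict_space borel {t..T})"
    by (rule borel_measurable_continuous_on_restrict[OF Yc])
  ultimately have "(\<lambda>u. G (Y u)) \<in> borel_measurable (restrict_space borel {t..T})"
    using measurable_compose by blast
  then have "set_borel_measurable borel {t..T} (\<lambda>u. G (Y u))"
    unfolding set_borel_measurable_def by (subst (asm) borel_measurable_restrict_space_iff) auto
  moreover have "G (Y u) = indicator (frontier Dom) (Y u) *\<^sub>R \<gamma> (Y u)" if "u \<in> {t..T}" for u
    using YC[OF that] unfolding G_def frontier_def by (auto split: split_indicator)
  then have "(\<lambda>u. indicator {t..T} u *\<^sub>R G (Y u))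
      = (\<lambda>u. indicator {t..T} u *\<^sub>R (indicator (frontier Dom) (Y u) *\<^sub>R \<gamma> (Y u)))"
    by (intro ext) (simp split: split_indicator)
  ultimately have "set_borel_measurable borel {t..T} (\<lambda>u. indicator (frontier Dom) (Y u) *\<^sub>R \<gamma> (Y u))"
    unfolding set_borel_measurable_def by simp
  then show ?thesis
    using bound by (intro set_integrable_interval_measure_bounded[OF F, where a="t - 1" and b=T]) auto
qed

lemma refl_sol_concat:
  fixes Dom :: "(real^'d) set" and \<gamma> :: "real^'d \<Rightarrow> real^'d" and b :: "real \<Rightarrow> real^'d \<Rightarrow> real^'d"
    and \<sigma> :: "real \<Rightarrow> real^'d \<Rightarrow> real^'m^'d" and \<alpha> \<beta> :: "real \<Rightarrow> real^'m"
    and Y1 Y2 z1 z2 :: "real \<Rightarrow> real^'d"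
  assumes bc: "continuous_on ({0..T} \<times> closure Dom) (\<lambda>(t, x). b t x)"
    and sc: "continuous_on ({0..T} \<times> closure Dom) (\<lambda>(t, x). \<sigma> t x)"
    and gc: "continuous_on (closure Dom) \<gamma>"
    and t0: "0 \<le> t" and t\<theta>: "t \<le> \<theta>" and \<theta>T: "\<theta> \<le> T"
    and s1: "refl_sol Dom \<gamma> b \<sigma> T t x \<alpha> Y1 z1" and a1: "\<alpha> \<in> L2 t T"
    and s2: "refl_sol Dom \<gamma> b \<sigma> T \<theta> (Y1 \<theta>) \<beta> Y2 z2" and a2: "\<beta> \<in> L2 \<theta> T"
  shows "refl_sol Dom \<gamma> b \<sigma> T t x (\<lambda>u. if u \<le> \<theta> then \<alpha> u else \<beta> u)
           (\<lambda>u. if u \<le> \<theta> then Y1 u else Y2 u) (\<lambda>u. if u \<le> \<theta> then z1 u else z1 \<theta> + z2 u)"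
proof -
  define ctl where "ctl = (\<lambda>u. if u \<le> \<theta> then \<alpha> u else \<beta> u)"
  define Y where "Y = (\<lambda>u. if u \<le> \<theta> then Y1 u else Y2 u)"
  define z where "z = (\<lambda>u. if u \<le> \<theta> then z1 u else z1 \<theta> + z2 u)"
  define drift where "drift Y' c u = b u (Y' u) - \<sigma> u (Y' u) *v c u"
    for Y' :: "real \<Rightarrow> real^'d" and c :: "real \<Rightarrow> real^'m" and u
  define refl where "refl Y' u = indicator (frontier Dom) (Y' u) *\<^sub>R \<gamma> (Y' u)" for Y' :: "real \<Rightarrow> real^'d" and u
  have Y1c: "continuous_on {t..T} Y1" and z1c: "continuous_on {t..T} z1"
    and bv1: "bounded_variation_on z1 t T"
    and eq1: "\<And>s. s \<in> {t..T} \<Longrightarrow> Y1 s \<in> closure Dom \<and> Y1 s = x + (LINT u:{t..s}|lborel. drift Y1 \<alpha> u) - z1 s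
       \<and> z1 s = (LINT u:{t..s}|interval_measure (cum_variation z1 t T). refl Y1 u)"
    using s1 unfolding refl_sol_def drift_def refl_def by blast+
  have Y2c: "continuous_on {\<theta>..T} Y2" and z2c: "continuous_on {\<theta>..T} z2"
    and bv2: "bounded_variation_on z2 \<theta> T"
    and eq2: "\<And>s. s \<in> {\<theta>..T} \<Longrightarrow> Y2 s \<in> closure Dom \<and> Y2 s = Y1 \<theta> + (LINT u:{\<theta>..s}|lborel. drift Y2 \<beta> u) - z2 s
       \<and> z2 s = (LINT u:{\<theta>..s}|interval_measure (cum_variation z2 \<theta> T). refl Y2 u)"
    using s2 unfolding refl_sol_def drift_def refl_def by blast+
  note start = refl_sol_start[OF s2 \<theta>T]
  note variation = cum_variation_concat[OF bv1 bv2 start(2) t\<theta> \<theta>T z_def]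
  have Yc: "continuous_on {t..T} Y" and zc: "continuous_on {t..T} z"
    unfolding Y_def z_def using t\<theta> \<theta>T start
    by (auto intro!: continuous_on_concat continuous_intros
        intro: continuous_on_subset[OF Y1c] continuous_on_subset[OF z1c] Y2c z2c)
  have "\<And>u. u \<in> {t..T} \<Longrightarrow> Y1 u \<in> closure Dom" "\<And>u. u \<in> {\<theta>..T} \<Longrightarrow> Y2 u \<in> closure Dom"
    using eq1 eq2 by blast+
  then have YC: "\<And>u. u \<in> {t..T} \<Longrightarrow> Y u \<in> closure Dom" unfolding Y_def by auto
  have F: "stieltjes_fn (cum_variation z t T)" by (rule stieltjes_fn_cum_variation[OF zc variation(1)])
  have F1: "stieltjes_fn (cum_variation z1 t T)" by (rule stieltjes_fn_cum_variation[OF z1c bv1])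
  have F2: "stieltjes_fn (cum_variation z2 \<theta> T)" by (rule stieltjes_fn_cum_variation[OF z2c bv2])
  have drift_int: "set_integrable lborel {t..T} (drift Y ctl)"
    unfolding drift_def ctl_def
    by (rule drift_integrable[OF bc sc Yc YC t0 L2_concat[OF a1 a2 t\<theta>]])
  have refl_int: "set_integrable (interval_measure (cum_variation z t T)) {t..T} (refl Y)"
    unfolding refl_def by (rule reflection_integrable[OF F Yc YC gc])
  note drift_concat = set_integral_lborel_concat[OF drift_int _ _ t\<theta> \<theta>T, of "drift Y1 \<alpha>" "drift Y2 \<beta>"]
  have equations: "Y s = x + (LINT u:{t..s}|lborel. drift Y ctl u) - z s
      \<and> z s = (LINT u:{t..s}|interval_measure (cum_variation z t T). refl Y u)" if s: "s \<in> {t..T}" for s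
  proof (cases "s \<le> \<theta>")
    case True
    have "(LINT u:{t..s}|lborel. drift Y ctl u) = (LINT u:{t..s}|lborel. drift Y1 \<alpha> u)"
      using True by (intro set_lebesgue_integral_cong) (auto simp: drift_def Y_def ctl_def)
    moreover have "(LINT u:{t..s}|interval_measure (cum_variation z t T). refl Y u) = z1 s"
    proof -
      have "(LINT u:{t..s}|interval_measure (cum_variation z t T). refl Y u)
          = (LINT u:{t..s}|interval_measure (cum_variation z1 t T). refl Y1 u)"
        by (rule set_integral_stieltjes_concat(1)[OF F F1 F2 _ _ start(1) refl_int])
          (use variation t\<theta> \<theta>T s True in \<open>auto simp: refl_def Y_def\<close>)
      then show ?thesis using eq1[OF s] by simp
    qed
    ultimately show ?thesis using eq1[OF s] True by (simp add: Y_def z_def)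
  next
    case False
    then have s\<theta>: "s \<in> {\<theta>..T}" using s by simp
    have "(LINT u:{t..s}|lborel. drift Y ctl u)
        = (LINT u:{t..\<theta>}|lborel. drift Y1 \<alpha> u) + (LINT u:{\<theta>..s}|lborel. drift Y2 \<beta> u)"
      using drift_concat[OF _ _ s\<theta>] by (simp add: drift_def Y_def ctl_def)
    moreover have "(LINT u:{t..s}|interval_measure (cum_variation z t T). refl Y u) = z1 \<theta> + z2 s"
    proof -
      have "(LINT u:{t..s}|interval_measure (cum_variation z t T). refl Y u)
          = (LINT u:{t..\<theta>}|interval_measure (cum_variation z1 t T). refl Y1 u)
            + (LINT u:{\<theta>..s}|interval_measure (cum_variation z2 \<theta> T). refl Y2 u)"
        by (rule set_integral_stieltjes_concat(2)[OF F F1 F2 _ _ start(1) refl_int])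
          (use variation t\<theta> \<theta>T s\<theta> in \<open>auto simp: refl_def Y_def\<close>)
      then show ?thesis using eq1[of \<theta>] eq2[OF s\<theta>] t\<theta> \<theta>T by simp
    qed
    ultimately show ?thesis using eq1[of \<theta>] eq2[OF s\<theta>] False t\<theta> \<theta>T by (simp add: Y_def z_def)
  qed
  have "refl_sol Dom \<gamma> b \<sigma> T t x ctl Y z"
    unfolding refl_sol_def using Yc zc variation(1) YC equations
    by (simp add: drift_def refl_def)
  then show ?thesis unfolding ctl_def Y_def z_def .
qed

section \<open>Dynamic programming\<close>

lemma INF_pair_le:
  fixes f :: "'a \<Rightarrow> 'b \<Rightarrow> real"
  assumes lb: "\<And>a c. P a c \<Longrightarrow> m \<le> f a c" and P: "P u v"
  shows "(INF p\<in>{(a, c). P a c}. case p of (a, c) \<Rightarrow> f a c) \<le> f u v"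
proof -
  have "bdd_below ((\<lambda>p. case p of (a, c) \<Rightarrow> f a c) ` {(a, c). P a c})"
    using lb by (intro bdd_belowI[of _ m]) auto
  then show ?thesis using P by (metis (no_types, lifting) cINF_lower case_prod_conv mem_Collect_eq)
qed

lemma INF_pair_greatest:
  fixes f :: "'a \<Rightarrow> 'b \<Rightarrow> real"
  assumes "\<And>a c. P a c \<Longrightarrow> m \<le> f a c" and "P u v"
  shows "m \<le> (INF p\<in>{(a, c). P a c}. case p of (a, c) \<Rightarrow> f a c)"
  using assms by (intro cINF_greatest) auto

lemma Max_image_remove_min:
  fixes \<theta> :: "'a \<Rightarrow> real"
  assumes "finite I" "i0 \<in> I" "I - {i0} \<noteq> {}" "\<And>j. j \<in> I - {i0} \<Longrightarrow> \<theta> i0 \<le> \<theta> j"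
  shows "Max (\<theta> ` I) = Max (\<theta> ` (I - {i0}))" and "\<theta> i0 \<le> Max (\<theta> ` (I - {i0}))"
proof -
  obtain j where j: "j \<in> I - {i0}" using assms(3) by blast
  show le: "\<theta> i0 \<le> Max (\<theta> ` (I - {i0}))"
    using assms(4)[OF j] Max_ge[of "\<theta> ` (I - {i0})" "\<theta> j"] j assms(1) by fastforce
  have "\<theta> ` I = insert (\<theta> i0) (\<theta> ` (I - {i0}))" using assms(2) by blast
  then show "Max (\<theta> ` I) = Max (\<theta> ` (I - {i0}))"
    using Max_insert[of "\<theta> ` (I - {i0})" "\<theta> i0"] assms(1,3) le by (simp add: max_def)
qed

lemma phiI_singleton: "phiI Dom \<gamma> b \<sigma> T \<psi> {i} r y = \<psi> i r y"
  unfolding phiI_def by simp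

lemma phiI_multiple:
  "card I \<noteq> 1 \<Longrightarrow> phiI Dom \<gamma> b \<sigma> T \<psi> I r y = Min ((\<lambda>i. \<psi> i r y + vI Dom \<gamma> b \<sigma> T \<psi> (I - {i}) r y) ` I)"
  unfolding phiI_def by simp

text \<open>The standing hypotheses: continuous coefficients, well-posedness of the reflected
  equation for L^2 controls, and costs \<psi>_i bounded from below (which makes all infima finite).\<close>
locale dp_setting =
  fixes Dom :: "(real^'d) set" and \<gamma> :: "real^'d \<Rightarrow> real^'d" and b :: "real \<Rightarrow> real^'d \<Rightarrow> real^'d"
    and \<sigma> :: "real \<Rightarrow> real^'d \<Rightarrow> real^'m^'d" and T :: real and \<psi> :: "nat \<Rightarrow> real \<Rightarrow> real^'d \<Rightarrow> real"
    and B :: "nat \<Rightarrow> real"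
  assumes b_cont: "continuous_on ({0..T} \<times> closure Dom) (\<lambda>(t, x). b t x)"
    and \<sigma>_cont: "continuous_on ({0..T} \<times> closure Dom) (\<lambda>(t, x). \<sigma> t x)"
    and \<gamma>_cont: "continuous_on (closure Dom) \<gamma>"
    and wellposed: "\<forall>t\<in>{0..T}. \<forall>x\<in>closure Dom. \<forall>\<alpha>\<in>(L2 t T :: (real \<Rightarrow> real^'m) set).
        \<exists>Y z. refl_sol Dom \<gamma> b \<sigma> T t x \<alpha> Y z \<and>
          (\<forall>Y' z'. refl_sol Dom \<gamma> b \<sigma> T t x \<alpha> Y' z' \<longrightarrow> (\<forall>s\<in>{t..T}. Y' s = Y s))"
    and \<psi>_lower: "\<And>i s y. s \<in> {0..T} \<Longrightarrow> y \<in> closure Dom \<Longrightarrow> B i \<le> \<psi> i s y"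
begin

definition stop_cost :: "nat set \<Rightarrow> real \<Rightarrow> real^'d \<Rightarrow> (real \<Rightarrow> real^'m) \<Rightarrow> (nat \<Rightarrow> real) \<Rightarrow> real" where
  "stop_cost I t x \<alpha> \<theta> = (1/2) * (LINT s:{t..Max (\<theta> ` I)}|lborel. (norm (\<alpha> s))\<^sup>2)
     + (\<Sum>i\<in>I. \<psi> i (\<theta> i) (Ysol Dom \<gamma> b \<sigma> T t x \<alpha> (\<theta> i)))"

lemma Ysol_eq:
  assumes t: "t \<in> {0..T}" and x: "x \<in> closure Dom" and a: "\<alpha> \<in> L2 t T"
    and sol: "refl_sol Dom \<gamma> b \<sigma> T t x \<alpha> Y z" and s: "s \<in> {t..T}"
  shows "Ysol Dom \<gamma> b \<sigma> T t x \<alpha> s = Y s"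
proof -
  obtain Y0 z0 where unique: "\<And>Y' z'. refl_sol Dom \<gamma> b \<sigma> T t x \<alpha> Y' z' \<Longrightarrow> (\<forall>s\<in>{t..T}. Y' s = Y0 s)"
    using wellposed t x a by blast
  show ?thesis
    unfolding Ysol_def
  proof (rule the_equality)
    show "\<exists>Y' z'. refl_sol Dom \<gamma> b \<sigma> T t x \<alpha> Y' z' \<and> Y' s = Y s" using sol by blast
    fix y assume "\<exists>Y' z'. refl_sol Dom \<gamma> b \<sigma> T t x \<alpha> Y' z' \<and> Y' s = y"
    then show "y = Y s" using unique unique[OF sol] s by metis
  qed
qed

lemma refl_sol_exists:
  assumes "t \<in> {0..T}" "x \<in> closure Dom" "\<alpha> \<in> L2 t T"
  obtains Y z where "refl_sol Dom \<gamma> b \<sigma> T t x \<alpha> Y z"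
    "\<And>s. s \<in> {t..T} \<Longrightarrow> Ysol Dom \<gamma> b \<sigma> T t x \<alpha> s = Y s"
  using wellposed Ysol_eq assms by meson

lemma Ysol_in_closure:
  assumes "t \<in> {0..T}" "x \<in> closure Dom" "\<alpha> \<in> L2 t T" "s \<in> {t..T}"
  shows "Ysol Dom \<gamma> b \<sigma> T t x \<alpha> s \<in> closure Dom"
  using refl_sol_exists[OF assms(1-3)] assms(4) unfolding refl_sol_def by metis

lemma Ysol_concat:
  assumes t: "t \<in> {0..T}" and x: "x \<in> closure Dom" and a: "\<alpha> \<in> L2 t T"
    and r: "r \<in> {t..T}" and be: "\<beta> \<in> L2 r T"
  shows "\<And>s. s \<in> {t..r} \<Longrightarrow> Ysol Dom \<gamma> b \<sigma> T t x (\<lambda>u. if u \<le> r then \<alpha> u else \<beta> u) s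
      = Ysol Dom \<gamma> b \<sigma> T t x \<alpha> s"
    and "\<And>s. s \<in> {r..T} \<Longrightarrow> Ysol Dom \<gamma> b \<sigma> T t x (\<lambda>u. if u \<le> r then \<alpha> u else \<beta> u) s
      = Ysol Dom \<gamma> b \<sigma> T r (Ysol Dom \<gamma> b \<sigma> T t x \<alpha> r) \<beta> s"
proof -
  obtain Y1 z1 where s1: "refl_sol Dom \<gamma> b \<sigma> T t x \<alpha> Y1 z1"
    and e1: "\<And>s. s \<in> {t..T} \<Longrightarrow> Ysol Dom \<gamma> b \<sigma> T t x \<alpha> s = Y1 s"
    using refl_sol_exists[OF t x a] by blast
  have r0: "r \<in> {0..T}" and yr: "Ysol Dom \<gamma> b \<sigma> T t x \<alpha> r = Y1 r" using r t e1 by auto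
  have "Y1 r \<in> closure Dom" using Ysol_in_closure[OF t x a r] yr by simp
  then obtain Y2 z2 where s2: "refl_sol Dom \<gamma> b \<sigma> T r (Y1 r) \<beta> Y2 z2"
    and e2: "\<And>s. s \<in> {r..T} \<Longrightarrow> Ysol Dom \<gamma> b \<sigma> T r (Y1 r) \<beta> s = Y2 s"
    using refl_sol_exists[OF r0 _ be] by blast
  have glued: "refl_sol Dom \<gamma> b \<sigma> T t x (\<lambda>u. if u \<le> r then \<alpha> u else \<beta> u)
      (\<lambda>u. if u \<le> r then Y1 u else Y2 u) (\<lambda>u. if u \<le> r then z1 u else z1 r + z2 u)"
    using t r by (intro refl_sol_concat[OF b_cont \<sigma>_cont \<gamma>_cont _ _ _ s1 a s2 be]) auto
  note Y = Ysol_eq[OF t x L2_concat[OF a be] glued]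
  show "Ysol Dom \<gamma> b \<sigma> T t x (\<lambda>u. if u \<le> r then \<alpha> u else \<beta> u) s = Ysol Dom \<gamma> b \<sigma> T t x \<alpha> s"
    if "s \<in> {t..r}" for s
    using Y[of s] e1[of s] that r by auto
  show "Ysol Dom \<gamma> b \<sigma> T t x (\<lambda>u. if u \<le> r then \<alpha> u else \<beta> u) s
      = Ysol Dom \<gamma> b \<sigma> T r (Ysol Dom \<gamma> b \<sigma> T t x \<alpha> r) \<beta> s" if "s \<in> {r..T}" for s
    using Y[of s] e2[of s] refl_sol_start(3)[OF s2] that r yr by auto
qed

lemma stop_cost_split:
  assumes t: "t \<in> {0..T}" and x: "x \<in> closure Dom" and a: "\<alpha> \<in> L2 t T"
    and r: "r \<in> {t..T}" and be: "\<beta> \<in> L2 r T"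
    and I: "finite I" "i0 \<in> I" "I - {i0} \<noteq> {}" and \<theta>: "\<theta> i0 = r" "\<forall>j\<in>I - {i0}. \<theta> j \<in> {r..T}"
  shows "stop_cost I t x (\<lambda>u. if u \<le> r then \<alpha> u else \<beta> u) \<theta>
    = (1/2) * (LINT s:{t..r}|lborel. (norm (\<alpha> s))\<^sup>2) + \<psi> i0 r (Ysol Dom \<gamma> b \<sigma> T t x \<alpha> r)
      + stop_cost (I - {i0}) r (Ysol Dom \<gamma> b \<sigma> T t x \<alpha> r) \<beta> \<theta>"
proof -
  define c where "c = (\<lambda>u. if u \<le> r then \<alpha> u else \<beta> u)"
  define y where "y = Ysol Dom \<gamma> b \<sigma> T t x \<alpha> r"
  have "\<And>j. j \<in> I - {i0} \<Longrightarrow> \<theta> i0 \<le> \<theta> j" using \<theta> by auto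
  note last = Max_image_remove_min[where \<theta>=\<theta>, OF I this]
  have M: "r \<le> Max (\<theta> ` (I - {i0}))" "Max (\<theta> ` (I - {i0})) \<le> T"
    using last(2) \<theta> Max_in[of "\<theta> ` (I - {i0})"] I by auto
  have "(LINT s:{t..Max (\<theta> ` I)}|lborel. (norm (c s))\<^sup>2)
      = (LINT s:{t..r}|lborel. (norm (\<alpha> s))\<^sup>2) + (LINT s:{r..Max (\<theta> ` (I - {i0}))}|lborel. (norm (\<beta> s))\<^sup>2)"
    unfolding c_def using energy_concat[OF a be _ M] r last(1) by simp
  moreover have "(\<Sum>j\<in>I. \<psi> j (\<theta> j) (Ysol Dom \<gamma> b \<sigma> T t x c (\<theta> j)))
      = \<psi> i0 r y + (\<Sum>j\<in>I - {i0}. \<psi> j (\<theta> j) (Ysol Dom \<gamma> b \<sigma> T r y \<beta> (\<theta> j)))"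
  proof -
    have "Ysol Dom \<gamma> b \<sigma> T t x c (\<theta> j) = Ysol Dom \<gamma> b \<sigma> T r y \<beta> (\<theta> j)" if "j \<in> I - {i0}" for j
      using Ysol_concat(2)[OF t x a r be] \<theta>(2) that unfolding c_def y_def by blast
    moreover have "Ysol Dom \<gamma> b \<sigma> T t x c r = y"
      using Ysol_concat(1)[OF t x a r be] r unfolding c_def y_def by simp
    ultimately show ?thesis using \<theta>(1) by (simp add: sum.remove[OF I(1,2)])
  qed
  ultimately show ?thesis
    unfolding stop_cost_def c_def[symmetric] y_def[symmetric] by (simp add: algebra_simps)
qed

end

context dp_setting
begin

lemma remaining_nonempty:
  assumes "card I \<noteq> 1" "i \<in> I"
  shows "I - {i} \<noteq> {}"
proof
  assume "I - {i} = {}"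
  then have "I = {i}" using assms(2) by blast
  with assms(1) show False by simp
qed

lemma stop_cost_lower:
  assumes t: "t \<in> {0..T}" and x: "x \<in> closure Dom" and a: "\<alpha> \<in> L2 t T"
    and \<theta>: "\<forall>i\<in>J. \<theta> i \<in> {t..T}"
  shows "(\<Sum>i\<in>J. B i) \<le> stop_cost J t x \<alpha> \<theta>"
proof -
  have "(\<Sum>i\<in>J. B i) \<le> (\<Sum>i\<in>J. \<psi> i (\<theta> i) (Ysol Dom \<gamma> b \<sigma> T t x \<alpha> (\<theta> i)))"
    using \<theta> t Ysol_in_closure[OF t x a] by (intro sum_mono \<psi>_lower) auto
  then show ?thesis unfolding stop_cost_def using energy_nonneg[of "{t..Max (\<theta> ` J)}" \<alpha>] by linarith
qed

lemma vI_stop_cost: "vI Dom \<gamma> b \<sigma> T \<psi> J t x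
  = (INF p \<in> {(\<alpha>, \<theta>). \<alpha> \<in> L2 t T \<and> (\<forall>i\<in>J. \<theta> i \<in> {t..T})}. case p of (\<alpha>, \<theta>) \<Rightarrow> stop_cost J t x \<alpha> \<theta>)"
  unfolding vI_def stop_cost_def ..

lemma vI_le_stop_cost:
  assumes "t \<in> {0..T}" "x \<in> closure Dom" "\<alpha> \<in> L2 t T" "\<forall>i\<in>J. \<theta> i \<in> {t..T}"
  shows "vI Dom \<gamma> b \<sigma> T \<psi> J t x \<le> stop_cost J t x \<alpha> \<theta>"
  unfolding vI_stop_cost using assms stop_cost_lower[OF assms(1,2)]
  by (intro INF_pair_le[where m="\<Sum>i\<in>J. B i"]) auto

lemma vI_greatest:
  assumes "t \<in> {0..T}"
    and "\<And>\<alpha> \<theta>. \<alpha> \<in> L2 t T \<Longrightarrow> \<forall>i\<in>J. \<theta> i \<in> {t..T} \<Longrightarrow> m \<le> stop_cost J t x \<alpha> \<theta>"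
  shows "m \<le> vI Dom \<gamma> b \<sigma> T \<psi> J t x"
  unfolding vI_stop_cost using assms L2_zero[of t T]
  by (intro INF_pair_greatest[where u="\<lambda>_. 0" and v="\<lambda>_. t"]) auto

lemma vI_lower:
  "t \<in> {0..T} \<Longrightarrow> x \<in> closure Dom \<Longrightarrow> (\<Sum>i\<in>J. B i) \<le> vI Dom \<gamma> b \<sigma> T \<psi> J t x"
  by (intro vI_greatest stop_cost_lower)

lemma phiI_lower:
  assumes I: "finite I" "I \<noteq> {}" and r: "r \<in> {0..T}" and y: "y \<in> closure Dom"
  shows "(\<Sum>i\<in>I. B i) \<le> phiI Dom \<gamma> b \<sigma> T \<psi> I r y"
proof (cases "card I = 1")
  case True
  then obtain i where "I = {i}" by (auto simp: card_Suc_eq)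
  then show ?thesis using \<psi>_lower[OF r y] by (simp add: phiI_singleton)
next
  case False
  have "(\<Sum>i\<in>I. B i) \<le> \<psi> i r y + vI Dom \<gamma> b \<sigma> T \<psi> (I - {i}) r y" if i: "i \<in> I" for i
    using \<psi>_lower[OF r y, of i] vI_lower[OF r y, of "I - {i}"] sum.remove[OF I(1) i, of B] by linarith
  then show ?thesis using I by (simp add: phiI_multiple[OF False])
qed

lemma uI_le:
  assumes t: "t \<in> {0..T}" and x: "x \<in> closure Dom" and I: "finite I" "I \<noteq> {}"
    and a: "\<alpha> \<in> L2 t T" and r: "r \<in> {t..T}"
  shows "uI Dom \<gamma> b \<sigma> T \<psi> I t x \<le> (1/2) * (LINT s:{t..r}|lborel. (norm (\<alpha> s))\<^sup>2)
          + phiI Dom \<gamma> b \<sigma> T \<psi> I r (Ysol Dom \<gamma> b \<sigma> T t x \<alpha> r)"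
  unfolding uI_def
proof (rule INF_pair_le[where m="\<Sum>i\<in>I. B i"])
  fix \<alpha>' :: "real \<Rightarrow> real^'m" and r' assume "\<alpha>' \<in> L2 t T \<and> r' \<in> {t..T}"
  then show "(\<Sum>i\<in>I. B i) \<le> (1/2) * (LINT s:{t..r'}|lborel. (norm (\<alpha>' s))\<^sup>2)
      + phiI Dom \<gamma> b \<sigma> T \<psi> I r' (Ysol Dom \<gamma> b \<sigma> T t x \<alpha>' r')"
    using phiI_lower[OF I, of r' "Ysol Dom \<gamma> b \<sigma> T t x \<alpha>' r'"] Ysol_in_closure[OF t x] t
      energy_nonneg[of "{t..r'}" \<alpha>'] by fastforce
qed (use a r in simp)

lemma uI_greatest:
  assumes "t \<in> {0..T}"
    and "\<And>\<alpha> r. \<alpha> \<in> L2 t T \<Longrightarrow> r \<in> {t..T} \<Longrightarrow>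
       m \<le> (1/2) * (LINT s:{t..r}|lborel. (norm (\<alpha> s))\<^sup>2) + phiI Dom \<gamma> b \<sigma> T \<psi> I r (Ysol Dom \<gamma> b \<sigma> T t x \<alpha> r)"
  shows "m \<le> uI Dom \<gamma> b \<sigma> T \<psi> I t x"
  unfolding uI_def using assms L2_zero[of t T]
  by (intro INF_pair_greatest[where u="\<lambda>_. 0" and v=t]) auto

lemma vI_eq_uI_singleton:
  assumes t: "t \<in> {0..T}" and x: "x \<in> closure Dom"
  shows "vI Dom \<gamma> b \<sigma> T \<psi> {i} t x = uI Dom \<gamma> b \<sigma> T \<psi> {i} t x"
proof (rule antisym)
  show "vI Dom \<gamma> b \<sigma> T \<psi> {i} t x \<le> uI Dom \<gamma> b \<sigma> T \<psi> {i} t x"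
  proof (rule uI_greatest[OF t])
    fix \<alpha> :: "real \<Rightarrow> real^'m" and r assume "\<alpha> \<in> L2 t T" "r \<in> {t..T}"
    then have "vI Dom \<gamma> b \<sigma> T \<psi> {i} t x \<le> stop_cost {i} t x \<alpha> (\<lambda>_. r)"
      by (intro vI_le_stop_cost[OF t x]) auto
    then show "vI Dom \<gamma> b \<sigma> T \<psi> {i} t x \<le> (1/2) * (LINT s:{t..r}|lborel. (norm (\<alpha> s))\<^sup>2)
        + phiI Dom \<gamma> b \<sigma> T \<psi> {i} r (Ysol Dom \<gamma> b \<sigma> T t x \<alpha> r)"
      by (simp add: stop_cost_def phiI_singleton)
  qed
  show "uI Dom \<gamma> b \<sigma> T \<psi> {i} t x \<le> vI Dom \<gamma> b \<sigma> T \<psi> {i} t x"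
  proof (rule vI_greatest[OF t])
    fix \<alpha> :: "real \<Rightarrow> real^'m" and \<theta> assume "\<alpha> \<in> L2 t T" "\<forall>j\<in>{i}. \<theta> j \<in> {t..T}"
    then show "uI Dom \<gamma> b \<sigma> T \<psi> {i} t x \<le> stop_cost {i} t x \<alpha> \<theta>"
      using uI_le[OF t x, of "{i}" \<alpha> "\<theta> i"] by (simp add: stop_cost_def phiI_singleton)
  qed
qed

text \<open>u \<le> v: given \<alpha> and stopping times \<theta>, stop first at r = min \<theta>; the remaining times
  form an admissible choice for the restarted problem with one index less.\<close>
lemma uI_le_vI:
  assumes t: "t \<in> {0..T}" and x: "x \<in> closure Dom" and I: "finite I" "card I \<noteq> 1" "I \<noteq> {}"
  shows "uI Dom \<gamma> b \<sigma> T \<psi> I t x \<le> vI Dom \<gamma> b \<sigma> T \<psi> I t x"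
proof (rule vI_greatest[OF t])
  fix \<alpha> :: "real \<Rightarrow> real^'m" and \<theta> assume a: "\<alpha> \<in> L2 t T" and \<theta>: "\<forall>i\<in>I. \<theta> i \<in> {t..T}"
  define r where "r = Min (\<theta> ` I)"
  have "r \<in> \<theta> ` I" unfolding r_def using I by (intro Min_in) auto
  then obtain i0 where i0: "i0 \<in> I" "\<theta> i0 = r" by auto
  have I': "I - {i0} \<noteq> {}" using remaining_nonempty[OF I(2) i0(1)] .
  have r: "r \<in> {t..T}" using \<theta> i0 by auto
  then have r0: "r \<in> {0..T}" using t by auto
  have "r \<le> \<theta> j" if "j \<in> I" for j unfolding r_def using I(1) that by simp
  then have \<theta>': "\<forall>j\<in>I - {i0}. \<theta> j \<in> {r..T}" using \<theta> by auto
  have a': "\<alpha> \<in> L2 r T" using L2_restrict[OF a] r by simp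
  define y where "y = Ysol Dom \<gamma> b \<sigma> T t x \<alpha> r"
  have y: "y \<in> closure Dom" unfolding y_def using Ysol_in_closure[OF t x a r] .
  define E where "E = (1/2) * (LINT s:{t..r}|lborel. (norm (\<alpha> s))\<^sup>2)"
  have "uI Dom \<gamma> b \<sigma> T \<psi> I t x \<le> E + phiI Dom \<gamma> b \<sigma> T \<psi> I r y"
    unfolding y_def E_def by (rule uI_le[OF t x I(1,3) a r])
  moreover have "phiI Dom \<gamma> b \<sigma> T \<psi> I r y \<le> \<psi> i0 r y + vI Dom \<gamma> b \<sigma> T \<psi> (I - {i0}) r y"
    unfolding phiI_multiple[OF I(2)] using I(1) i0(1) by (intro Min_le) auto
  moreover have "vI Dom \<gamma> b \<sigma> T \<psi> (I - {i0}) r y \<le> stop_cost (I - {i0}) r y \<alpha> \<theta>"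
    by (rule vI_le_stop_cost[OF r0 y a' \<theta>'])
  moreover have "stop_cost I t x \<alpha> \<theta> = E + \<psi> i0 r y + stop_cost (I - {i0}) r y \<alpha> \<theta>"
    using stop_cost_split[OF t x a r a' I(1) i0(1) I' i0(2) \<theta>'] unfolding E_def y_def by simp
  ultimately show "uI Dom \<gamma> b \<sigma> T \<psi> I t x \<le> stop_cost I t x \<alpha> \<theta>" by linarith
qed

text \<open>v \<le> u: given \<alpha> and a first stopping time r, pick the index i0 attaining phi^I at (r, Y_r);
  every admissible continuation (\<beta>, \<theta>') for the remaining indices, concatenated with \<alpha>
  and completed by \<theta>_i0 = r, is admissible for v^I.\<close>
lemma vI_le_uI:
  assumes t: "t \<in> {0..T}" and x: "x \<in> closure Dom" and I: "finite I" "card I \<noteq> 1" "I \<noteq> {}"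
  shows "vI Dom \<gamma> b \<sigma> T \<psi> I t x \<le> uI Dom \<gamma> b \<sigma> T \<psi> I t x"
proof (rule uI_greatest[OF t])
  fix \<alpha> :: "real \<Rightarrow> real^'m" and r assume a: "\<alpha> \<in> L2 t T" and r: "r \<in> {t..T}"
  define y where "y = Ysol Dom \<gamma> b \<sigma> T t x \<alpha> r"
  define E where "E = (1/2) * (LINT s:{t..r}|lborel. (norm (\<alpha> s))\<^sup>2)"
  have "phiI Dom \<gamma> b \<sigma> T \<psi> I r y \<in> (\<lambda>i. \<psi> i r y + vI Dom \<gamma> b \<sigma> T \<psi> (I - {i}) r y) ` I"
    unfolding phiI_multiple[OF I(2)] using I(1,3) by (intro Min_in) auto
  then obtain i0 where i0: "i0 \<in> I"
    and phi: "phiI Dom \<gamma> b \<sigma> T \<psi> I r y = \<psi> i0 r y + vI Dom \<gamma> b \<sigma> T \<psi> (I - {i0}) r y"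
    by auto
  have I': "I - {i0} \<noteq> {}" using remaining_nonempty[OF I(2) i0] .
  have r0: "r \<in> {0..T}" using r t by auto
  have "vI Dom \<gamma> b \<sigma> T \<psi> I t x - (E + \<psi> i0 r y) \<le> vI Dom \<gamma> b \<sigma> T \<psi> (I - {i0}) r y"
  proof (rule vI_greatest[OF r0])
    fix \<beta> :: "real \<Rightarrow> real^'m" and \<theta>' assume be: "\<beta> \<in> L2 r T" and \<theta>': "\<forall>j\<in>I - {i0}. \<theta>' j \<in> {r..T}"
    define \<theta> where "\<theta> = \<theta>'(i0 := r)"
    have \<theta>: "\<theta> i0 = r" "\<forall>j\<in>I - {i0}. \<theta> j \<in> {r..T}" using \<theta>' unfolding \<theta>_def by auto
    have "\<forall>j\<in>I. \<theta> j \<in> {t..T}" using \<theta> r by (metis Diff_iff atLeastAtMost_iff order_trans singletonD)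
    then have "vI Dom \<gamma> b \<sigma> T \<psi> I t x \<le> stop_cost I t x (\<lambda>u. if u \<le> r then \<alpha> u else \<beta> u) \<theta>"
      using L2_concat[OF a be] r by (intro vI_le_stop_cost[OF t x]) auto
    also have "\<dots> = E + \<psi> i0 r y + stop_cost (I - {i0}) r y \<beta> \<theta>"
      unfolding E_def y_def by (rule stop_cost_split[OF t x a r be I(1) i0 I' \<theta>])
    also have "stop_cost (I - {i0}) r y \<beta> \<theta> = stop_cost (I - {i0}) r y \<beta> \<theta>'"
    proof -
      have "\<theta> ` (I - {i0}) = \<theta>' ` (I - {i0})" unfolding \<theta>_def by auto
      moreover have "(\<Sum>j\<in>I - {i0}. \<psi> j (\<theta> j) (Ysol Dom \<gamma> b \<sigma> T r y \<beta> (\<theta> j)))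
          = (\<Sum>j\<in>I - {i0}. \<psi> j (\<theta>' j) (Ysol Dom \<gamma> b \<sigma> T r y \<beta> (\<theta>' j)))"
        unfolding \<theta>_def by (intro sum.cong) auto
      ultimately show ?thesis unfolding stop_cost_def by simp
    qed
    finally show "vI Dom \<gamma> b \<sigma> T \<psi> I t x - (E + \<psi> i0 r y) \<le> stop_cost (I - {i0}) r y \<beta> \<theta>'"
      by simp
  qed
  then show "vI Dom \<gamma> b \<sigma> T \<psi> I t x \<le> (1/2) * (LINT s:{t..r}|lborel. (norm (\<alpha> s))\<^sup>2)
      + phiI Dom \<gamma> b \<sigma> T \<psi> I r (Ysol Dom \<gamma> b \<sigma> T t x \<alpha> r)"
    unfolding y_def[symmetric] E_def[symmetric] phi by simp
qed

lemma vI_eq_uI: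
  assumes "t \<in> {0..T}" "x \<in> closure Dom" "finite I" "I \<noteq> {}"
  shows "vI Dom \<gamma> b \<sigma> T \<psi> I t x = uI Dom \<gamma> b \<sigma> T \<psi> I t x"
proof (cases "card I = 1")
  case True
  then obtain i where "I = {i}" by (auto simp: card_Suc_eq)
  then show ?thesis using vI_eq_uI_singleton[OF assms(1,2)] by simp
next
  case False
  show ?thesis
    by (rule antisym[OF vI_le_uI[OF assms(1-3) False assms(4)] uI_le_vI[OF assms(1-3) False assms(4)]])
qed

end

text \<open>Only the continuity of the coefficients, the well-posedness of the reflected equation and
  the boundedness of the costs are used; the regularity of the domain and the oblique reflection
  condition are what guarantee well-posedness in the first place.\<close>
theorem mainTheorem15:
  fixes Dom :: "(real^'d) set" and \<rho> :: "real^'d \<Rightarrow> real" and G n :: "real^'d \<Rightarrow> real^'d"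
    and \<gamma> :: "real^'d \<Rightarrow> real^'d" and b :: "real \<Rightarrow> real^'d \<Rightarrow> real^'d"
    and \<sigma> :: "real \<Rightarrow> real^'d \<Rightarrow> real^'m^'d" and T c0 :: real
    and \<psi> :: "nat \<Rightarrow> real \<Rightarrow> real^'d \<Rightarrow> real"
  assumes T: "T > 0"
    and O_bdd: "bounded Dom" and O_open: "open Dom"
    and O_reg: "W2inf_domain Dom \<rho> G"
    and n_def: "\<forall>x\<in>frontier Dom. n x = (1 / norm (G x)) *\<^sub>R G x"
    and \<gamma>_lip: "\<exists>L. L-lipschitz_on (closure Dom) \<gamma>"
    and c0: "c0 > 0" and \<gamma>_n: "\<forall>x\<in>frontier Dom. \<gamma> x \<bullet> n x \<ge> c0"
    and b_cont: "continuous_on ({0..T} \<times> closure Dom) (\<lambda>(t, x). b t x)"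
    and \<sigma>_cont: "continuous_on ({0..T} \<times> closure Dom) (\<lambda>(t, x). \<sigma> t x)"
    and b_lip: "\<exists>L. \<forall>t\<in>{0..T}. L-lipschitz_on (closure Dom) (b t)"
    and \<sigma>_lip: "\<exists>L. \<forall>t\<in>{0..T}. L-lipschitz_on (closure Dom) (\<sigma> t)"
    and wellposed: "\<forall>t\<in>{0..T}. \<forall>x\<in>closure Dom. \<forall>\<alpha>\<in>(L2 t T :: (real \<Rightarrow> real^'m) set).
        \<exists>Y z. refl_sol Dom \<gamma> b \<sigma> T t x \<alpha> Y z \<and>
          (\<forall>Y' z'. refl_sol Dom \<gamma> b \<sigma> T t x \<alpha> Y' z' \<longrightarrow> (\<forall>s\<in>{t..T}. Y' s = Y s))"
    and \<psi>_meas: "\<forall>i. set_borel_measurable borel ({0..T} \<times> closure Dom) (\<lambda>(t, x). \<psi> i t x)"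
    and \<psi>_bdd: "\<forall>i. bounded ((\<lambda>(t, x). \<psi> i t x) ` ({0..T} \<times> closure Dom))"
  shows "\<forall>I. finite I \<and> I \<noteq> {} \<longrightarrow>
           (\<forall>t\<in>{0..T}. \<forall>x\<in>closure Dom.
              vI Dom \<gamma> b \<sigma> T \<psi> I t x = uI Dom \<gamma> b \<sigma> T \<psi> I t x)"
proof (intro allI impI ballI)
  fix I :: "nat set" and t x
  assume I: "finite I \<and> I \<noteq> {}" and t: "t \<in> {0..T}" and x: "x \<in> closure Dom"
  have \<gamma>_cont: "continuous_on (closure Dom) \<gamma>"
    using \<gamma>_lip lipschitz_on_continuous_on by blast
  have "\<forall>i. \<exists>C. \<forall>v\<in>(\<lambda>(t, x). \<psi> i t x) ` ({0..T} \<times> closure Dom). norm v \<le> C"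
    using \<psi>_bdd unfolding bounded_iff by blast
  then obtain C where C: "\<And>i. \<forall>v\<in>(\<lambda>(t, x). \<psi> i t x) ` ({0..T} \<times> closure Dom). norm v \<le> C i"
    by metis
  have \<psi>_lower: "- C i \<le> \<psi> i s y" if "s \<in> {0..T}" "y \<in> closure Dom" for i s y
    using C[of i] that by force
  interpret dp_setting Dom \<gamma> b \<sigma> T \<psi> "\<lambda>i. - C i"
    using b_cont \<sigma>_cont \<gamma>_cont wellposed \<psi>_lower by unfold_locales auto
  show "vI Dom \<gamma> b \<sigma> T \<psi> I t x = uI Dom \<gamma> b \<sigma> T \<psi> I t x"
    using vI_eq_uI[OF t x] I by blast
qed

end
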